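(* Let $(\mathcal M,X,\bot)$ be a non trivial irreducible concurrent system with characteristic root $r$. Then the digraph $\mathrm{ADSC}^+$ has spectral radius $r^{-1}$, equal to the spectral radius of $\mathrm{ADSC}$.
   Context: A trace monoid $\mathcal M=\mathcal M(\Sigma,I)$ is $\langle\Sigma\mid ab=ba\ ((a,b)\in I)\rangle$, $\Sigma$ finite, $I$ irreflexive symmetric; $|x|$ is length, $\varepsilon$ the unit, $D=(\Sigma\times\Sigma)\setminus I$; $\mathcal M$ is irreducible if $(\Sigma,D)$ is connected. A clique is a trace of pairwise distinct letters pairwise in $I$; $\mathfrak C$ is the set of nonempty cliques; for $c,c'\in\mathfrak C$, $c\to c'$ means every letter of $c'$ is $D$-related to some letter of $c$. Each nonempty trace $x$ has a unique normal form $c_1\cdots c_h$, $c_i\in\mathfrak C$, $c_i\to c_{i+1}$; $C_1(x)=c_1$. A concurrent system $(\mathcal M,X,\bot)$: $X$ finite, $\bot\notin X$, right action of $\mathcal M$ on $X\cup\{\bot\}$ with $\bot\cdot x=\bot$; $\mathcal M_\alpha=\{x:\alpha\cdot x\ne\bot\}$, $\mathfrak C_\alpha=\mathfrak C\cap\mathcal M_\alpha$. Non trivial: there exist $\alpha\in X$ and a letter $a$ with $\alpha\cdot a\neq\bot$. Irreducible: accessible (any state reaches any state), alive (for all $\alpha$ and letters $a$ some $x$ containing $a$ with $\alpha\cdot x\ne\bot$), and $\mathcal M$ irreducible. Characteristic root: $r=\min_{\alpha,\beta}$ of the radius of convergence of $\sum_n\#\{x:|x|=n,\alpha\cdot x=\beta\}z^n$.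 DSC: nodes $(\alpha,c)$, $c\in\mathfrak C_\alpha$, arc $(\alpha,c)\to(\beta,d)$ iff $\beta=\alpha\cdot c$ and $c\to d$. ADSC: nodes $(\alpha,c,i)$ with $(\alpha,c)$ a DSC node and $1\le i\le|c|$; arcs $(\alpha,c,i)\to(\alpha,c,i+1)$, and $(\alpha,c,|c|)\to(\beta,d,1)$ whenever $(\alpha,c)\to(\beta,d)$ in DSC. A DSC node $(\alpha,c)$ is positive if some $x\in\mathcal M_\alpha$ satisfies $C_1(xy)=c$ for all $y\in\mathcal M_{\alpha\cdot x}$; $(\alpha,c,i)$ is positive iff $(\alpha,c)$ is. $\mathrm{ADSC}^+$ is the subdigraph induced by positive nodes. The spectral radius of a digraph is that of its adjacency matrix. *)

theory Defs
  imports "HOL-Analysis.Summation_Tests" "Jordan_Normal_Form.Spectral_Radius"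
begin

text \<open>Traces over the alphabet Sig with independence relation I are represented by
  words (lists over Sig) modulo the congruence generated by swapping adjacent
  independent letters.\<close>

definition trace_monoid :: "'a set \<Rightarrow> ('a \<times> 'a) set \<Rightarrow> bool" where
  "trace_monoid Sig I \<longleftrightarrow> finite Sig \<and> I \<subseteq> Sig \<times> Sig \<and> irrefl I \<and> sym I"

definition words :: "'a set \<Rightarrow> 'a list set" where
  "words Sig = {w. set w \<subseteq> Sig}"

inductive swap_step :: "('a \<times> 'a) set \<Rightarrow> 'a list \<Rightarrow> 'a list \<Rightarrow> bool" for I where
  "(a, b) \<in> I \<Longrightarrow> swap_step I (u @ [a, b] @ v) (u @ [b, a] @ v)"

definition trace_eq :: "('a \<times> 'a) set \<Rightarrow> 'a list \<Rightarrow> 'a list \<Rightarrow> bool" where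
  "trace_eq I = (swap_step I)\<^sup>*\<^sup>*"

definition dep :: "'a set \<Rightarrow> ('a \<times> 'a) set \<Rightarrow> ('a \<times> 'a) set" where
  "dep Sig I = (Sig \<times> Sig) - I"

definition irreducible_monoid :: "'a set \<Rightarrow> ('a \<times> 'a) set \<Rightarrow> bool" where
  "irreducible_monoid Sig I \<longleftrightarrow> Sig \<noteq> {} \<and> (\<forall>a\<in>Sig. \<forall>b\<in>Sig. (a, b) \<in> (dep Sig I)\<^sup>*)"

text \<open>A clique (trace of pairwise distinct, pairwise independent letters) is determined by
  its set of letters; nonempty cliques are represented by nonempty such sets.\<close>
definition cliques :: "'a set \<Rightarrow> ('a \<times> 'a) set \<Rightarrow> 'a set set" where
  "cliques Sig I = {c. c \<noteq> {} \<and> c \<subseteq> Sig \<and> (\<forall>a\<in>c. \<forall>b\<in>c. a \<noteq> b \<longrightarrow> (a, b) \<in> I)}"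

definition clique_word :: "'a set \<Rightarrow> 'a list" where
  "clique_word c = (SOME w. distinct w \<and> set w = c)"

definition clique_arrow :: "'a set \<Rightarrow> ('a \<times> 'a) set \<Rightarrow> 'a set \<Rightarrow> 'a set \<Rightarrow> bool" where
  "clique_arrow Sig I c c' \<longleftrightarrow> (\<forall>b\<in>c'. \<exists>a\<in>c. (a, b) \<in> dep Sig I)"

definition is_normal_form :: "'a set \<Rightarrow> ('a \<times> 'a) set \<Rightarrow> 'a set list \<Rightarrow> 'a list \<Rightarrow> bool" where
  "is_normal_form Sig I cs w \<longleftrightarrow>
     set cs \<subseteq> cliques Sig I \<and>
     (\<forall>i. Suc i < length cs \<longrightarrow> clique_arrow Sig I (cs ! i) (cs ! Suc i)) \<and>
     trace_eq I (concat (map clique_word cs)) w"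

definition first_clique_is :: "'a set \<Rightarrow> ('a \<times> 'a) set \<Rightarrow> 'a list \<Rightarrow> 'a set \<Rightarrow> bool" where
  "first_clique_is Sig I w c \<longleftrightarrow> (\<exists>cs. is_normal_form Sig I cs w \<and> cs \<noteq> [] \<and> hd cs = c)"

text \<open>States are the elements of X; the sink state \<bottom> is represented by None.
  The right action of the trace monoid is given by its action on letters, delta;
  it induces an action of the monoid exactly when independent letters commute.\<close>

fun run :: "('x \<Rightarrow> 'a \<Rightarrow> 'x option) \<Rightarrow> 'x option \<Rightarrow> 'a list \<Rightarrow> 'x option" where
  "run delta s [] = s"
| "run delta s (a # w) = (case s of None \<Rightarrow> None | Some \<alpha> \<Rightarrow> run delta (delta \<alpha> a) w)"

definition concurrent_system ::
  "'a set \<Rightarrow> ('a \<times> 'a) set \<Rightarrow> 'x set \<Rightarrow> ('x \<Rightarrow> 'a \<Rightarrow> 'x option) \<Rightarrow> bool" where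
  "concurrent_system Sig I X delta \<longleftrightarrow>
     trace_monoid Sig I \<and> finite X \<and>
     (\<forall>\<alpha>\<in>X. \<forall>a\<in>Sig. delta \<alpha> a = None \<or> (\<exists>\<beta>\<in>X. delta \<alpha> a = Some \<beta>)) \<and>
     (\<forall>\<alpha>\<in>X. \<forall>(a, b)\<in>I. run delta (Some \<alpha>) [a, b] = run delta (Some \<alpha>) [b, a])"

definition M_at :: "'a set \<Rightarrow> ('x \<Rightarrow> 'a \<Rightarrow> 'x option) \<Rightarrow> 'x \<Rightarrow> 'a list set" where
  "M_at Sig delta \<alpha> = {w \<in> words Sig. run delta (Some \<alpha>) w \<noteq> None}"

definition non_trivial :: "'a set \<Rightarrow> 'x set \<Rightarrow> ('x \<Rightarrow> 'a \<Rightarrow> 'x option) \<Rightarrow> bool" where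
  "non_trivial Sig X delta \<longleftrightarrow> (\<exists>\<alpha>\<in>X. \<exists>a\<in>Sig. delta \<alpha> a \<noteq> None)"

definition accessible :: "'a set \<Rightarrow> 'x set \<Rightarrow> ('x \<Rightarrow> 'a \<Rightarrow> 'x option) \<Rightarrow> bool" where
  "accessible Sig X delta \<longleftrightarrow>
     (\<forall>\<alpha>\<in>X. \<forall>\<beta>\<in>X. \<exists>w\<in>words Sig. run delta (Some \<alpha>) w = Some \<beta>)"

definition alive :: "'a set \<Rightarrow> 'x set \<Rightarrow> ('x \<Rightarrow> 'a \<Rightarrow> 'x option) \<Rightarrow> bool" where
  "alive Sig X delta \<longleftrightarrow>
     (\<forall>\<alpha>\<in>X. \<forall>a\<in>Sig. \<exists>w\<in>words Sig. a \<in> set w \<and> run delta (Some \<alpha>) w \<noteq> None)"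

definition irreducible_system ::
  "'a set \<Rightarrow> ('a \<times> 'a) set \<Rightarrow> 'x set \<Rightarrow> ('x \<Rightarrow> 'a \<Rightarrow> 'x option) \<Rightarrow> bool" where
  "irreducible_system Sig I X delta \<longleftrightarrow>
     accessible Sig X delta \<and> alive Sig X delta \<and> irreducible_monoid Sig I"

definition count_traces ::
  "'a set \<Rightarrow> ('a \<times> 'a) set \<Rightarrow> ('x \<Rightarrow> 'a \<Rightarrow> 'x option) \<Rightarrow> 'x \<Rightarrow> 'x \<Rightarrow> nat \<Rightarrow> nat" where
  "count_traces Sig I delta \<alpha> \<beta> n =
     card ((\<lambda>w. {v. trace_eq I w v})
            ` {w \<in> words Sig. length w = n \<and> run delta (Some \<alpha>) w = Some \<beta>})"

definition char_root ::
  "'a set \<Rightarrow> ('a \<times> 'a) set \<Rightarrow> 'x set \<Rightarrow> ('x \<Rightarrow> 'a \<Rightarrow> 'x option) \<Rightarrow> ereal" where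
  "char_root Sig I X delta =
     Min ((\<lambda>(\<alpha>, \<beta>). conv_radius (\<lambda>n. real (count_traces Sig I delta \<alpha> \<beta> n))) ` (X \<times> X))"

definition act_clique :: "('x \<Rightarrow> 'a \<Rightarrow> 'x option) \<Rightarrow> 'x \<Rightarrow> 'a set \<Rightarrow> 'x option" where
  "act_clique delta \<alpha> c = run delta (Some \<alpha>) (clique_word c)"

definition DSC_nodes ::
  "'a set \<Rightarrow> ('a \<times> 'a) set \<Rightarrow> 'x set \<Rightarrow> ('x \<Rightarrow> 'a \<Rightarrow> 'x option) \<Rightarrow> ('x \<times> 'a set) set" where
  "DSC_nodes Sig I X delta =
     {(\<alpha>, c). \<alpha> \<in> X \<and> c \<in> cliques Sig I \<and> act_clique delta \<alpha> c \<noteq> None}"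

definition DSC_arc ::
  "'a set \<Rightarrow> ('a \<times> 'a) set \<Rightarrow> 'x set \<Rightarrow> ('x \<Rightarrow> 'a \<Rightarrow> 'x option)
     \<Rightarrow> 'x \<times> 'a set \<Rightarrow> 'x \<times> 'a set \<Rightarrow> bool" where
  "DSC_arc Sig I X delta u v \<longleftrightarrow>
     u \<in> DSC_nodes Sig I X delta \<and> v \<in> DSC_nodes Sig I X delta \<and>
     act_clique delta (fst u) (snd u) = Some (fst v) \<and> clique_arrow Sig I (snd u) (snd v)"

definition ADSC_nodes ::
  "'a set \<Rightarrow> ('a \<times> 'a) set \<Rightarrow> 'x set \<Rightarrow> ('x \<Rightarrow> 'a \<Rightarrow> 'x option) \<Rightarrow> ('x \<times> 'a set \<times> nat) set" where
  "ADSC_nodes Sig I X delta =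
     {(\<alpha>, c, i). (\<alpha>, c) \<in> DSC_nodes Sig I X delta \<and> 1 \<le> i \<and> i \<le> card c}"

definition ADSC_arc ::
  "'a set \<Rightarrow> ('a \<times> 'a) set \<Rightarrow> 'x set \<Rightarrow> ('x \<Rightarrow> 'a \<Rightarrow> 'x option)
     \<Rightarrow> 'x \<times> 'a set \<times> nat \<Rightarrow> 'x \<times> 'a set \<times> nat \<Rightarrow> bool" where
  "ADSC_arc Sig I X delta u v \<longleftrightarrow>
     u \<in> ADSC_nodes Sig I X delta \<and> v \<in> ADSC_nodes Sig I X delta \<and>
     (case (u, v) of ((\<alpha>, c, i), (\<beta>, d, j)) \<Rightarrow>
        (\<beta> = \<alpha> \<and> d = c \<and> j = i + 1) \<or>
        (i = card c \<and> j = 1 \<and> DSC_arc Sig I X delta (\<alpha>, c) (\<beta>, d)))"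

definition positive_node ::
  "'a set \<Rightarrow> ('a \<times> 'a) set \<Rightarrow> 'x set \<Rightarrow> ('x \<Rightarrow> 'a \<Rightarrow> 'x option) \<Rightarrow> 'x \<Rightarrow> 'a set \<Rightarrow> bool" where
  "positive_node Sig I X delta \<alpha> c \<longleftrightarrow>
     (\<exists>x\<in>M_at Sig delta \<alpha>.
        \<forall>y\<in>M_at Sig delta (the (run delta (Some \<alpha>) x)).
          x @ y \<noteq> [] \<and> first_clique_is Sig I (x @ y) c)"

definition ADSC_pos_nodes ::
  "'a set \<Rightarrow> ('a \<times> 'a) set \<Rightarrow> 'x set \<Rightarrow> ('x \<Rightarrow> 'a \<Rightarrow> 'x option) \<Rightarrow> ('x \<times> 'a set \<times> nat) set" where
  "ADSC_pos_nodes Sig I X delta =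
     {(\<alpha>, c, i). (\<alpha>, c, i) \<in> ADSC_nodes Sig I X delta \<and> positive_node Sig I X delta \<alpha> c}"

text \<open>Adjacency matrix of the digraph with finite node set V and arc relation E,
  w.r.t. an (arbitrary) enumeration of V; the spectral radius does not depend on it.\<close>
definition adjacency_mat :: "'v set \<Rightarrow> ('v \<Rightarrow> 'v \<Rightarrow> bool) \<Rightarrow> complex mat" where
  "adjacency_mat V E =
     (let vs = (SOME vs. distinct vs \<and> set vs = V)
      in mat (length vs) (length vs) (\<lambda>(i, j). if E (vs ! i) (vs ! j) then 1 else 0))"

definition digraph_spectral_radius :: "'v set \<Rightarrow> ('v \<Rightarrow> 'v \<Rightarrow> bool) \<Rightarrow> real" where
  "digraph_spectral_radius V E = spectral_radius (adjacency_mat V E)"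

end

theory Submission
  imports Defs
begin

section \<open>Exponential growth of sequences\<close>

definition exp_bounded :: "(nat \<Rightarrow> real) \<Rightarrow> real \<Rightarrow> bool" where
  "exp_bounded f s \<longleftrightarrow> (\<exists>C. \<forall>n\<ge>1. f n \<le> C * s ^ n)"

lemma exp_bounded_mono: "exp_bounded f s \<Longrightarrow> (\<And>n. 1 \<le> n \<Longrightarrow> g n \<le> f n) \<Longrightarrow> exp_bounded g s"
  unfolding exp_bounded_def by (meson order_trans)

lemma exp_bounded_cmult:
  assumes "exp_bounded f s" "0 \<le> K" shows "exp_bounded (\<lambda>n. K * f n) s"
proof -
  obtain C where "\<forall>n\<ge>1. f n \<le> C * s ^ n" using assms(1) exp_bounded_def by auto
  then have "\<forall>n\<ge>1. K * f n \<le> (K * C) * s ^ n" using assms(2) by (simp add: mult_left_mono mult.assoc)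
  then show ?thesis unfolding exp_bounded_def by blast
qed

lemma exp_bounded_shift:
  assumes "exp_bounded f s" shows "exp_bounded (\<lambda>n. f (n + j)) s"
proof -
  obtain C where C: "\<forall>n\<ge>1. f n \<le> C * s ^ n" using assms exp_bounded_def by auto
  have "f (n + j) \<le> (C * s ^ j) * s ^ n" if "1 \<le> n" for n
  proof -
    have "f (n + j) \<le> C * s ^ (n + j)" using C that by simp
    then show ?thesis by (simp add: power_add ac_simps)
  qed
  then show ?thesis unfolding exp_bounded_def by blast
qed

lemma exp_bounded_window_sum:
  assumes f: "exp_bounded f s" and s: "0 < s"
  shows "exp_bounded (\<lambda>n. \<Sum>m\<in>{n..n + L}. f m) s"
proof -
  obtain C where C: "\<forall>n\<ge>1. f n \<le> C * s ^ n" using f exp_bounded_def by auto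
  define C' where "C' = max C 0"
  have C': "f n \<le> C' * s ^ n" if "1 \<le> n" for n
    using C that s unfolding C'_def by (meson max.cobounded1 mult_right_mono order_trans zero_le_power less_imp_le)
  define M where "M = max 1 s ^ L"
  have "(\<Sum>m\<in>{n..n + L}. f m) \<le> (real (Suc L) * C' * M) * s ^ n" if n: "1 \<le> n" for n
  proof -
    have "f m \<le> C' * M * s ^ n" if m: "m \<in> {n..n + L}" for m
    proof -
      have "s ^ (m - n) \<le> max 1 s ^ (m - n)" using s by (intro power_mono) auto
      also have "\<dots> \<le> M" unfolding M_def using m by (intro power_increasing) auto
      finally have "C' * (s ^ n * s ^ (m - n)) \<le> C' * (s ^ n * M)"
        using s unfolding C'_def by (intro mult_left_mono) auto
      moreover have "s ^ m = s ^ n * s ^ (m - n)" using m by (simp flip: power_add)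
      ultimately show ?thesis using C'[of m] m n by (simp add: ac_simps)
    qed
    then have "(\<Sum>m\<in>{n..n + L}. f m) \<le> (\<Sum>m\<in>{n..n + L}. C' * M * s ^ n)" by (rule sum_mono)
    then show ?thesis by simp
  qed
  then show ?thesis unfolding exp_bounded_def by blast
qed

lemma exp_bounded_lower_bound:
  assumes f: "exp_bounded f s" and s: "0 < s" and a: "0 \<le> a" and low: "\<And>n. 1 \<le> n \<Longrightarrow> a ^ n \<le> f n"
  shows "a \<le> s"
proof (rule ccontr)
  assume "\<not> a \<le> s"
  then have q: "1 < a / s" using s by simp
  obtain C where C: "\<forall>n\<ge>1. f n \<le> C * s ^ n" using f exp_bounded_def by auto
  obtain n where "C < (a / s) ^ n" using real_arch_pow[OF q] by blast
  moreover have "(a / s) ^ n \<le> (a / s) ^ Suc n" using q by (intro power_increasing) auto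
  ultimately have "C < (a / s) ^ Suc n" by linarith
  then have "C * s ^ Suc n < a ^ Suc n" using s by (simp add: power_divide field_simps)
  moreover have "a ^ Suc n \<le> f (Suc n)" using low[of "Suc n"] by simp
  moreover have "f (Suc n) \<le> C * s ^ Suc n" using C[rule_format, of "Suc n"] by simp
  ultimately show False by simp
qed

lemma exp_bounded_of_summable:
  assumes r: "0 < r" and sum: "summable (\<lambda>n. f n * r ^ n)"
  shows "exp_bounded f (1 / r)"
proof -
  have "(\<lambda>n. f n * r ^ n) \<longlonglongrightarrow> 0" using sum by (rule summable_LIMSEQ_zero)
  then have "Bseq (\<lambda>n. f n * r ^ n)" by (intro convergent_imp_Bseq convergentI)
  then obtain C where C: "\<And>n. norm (f n * r ^ n) \<le> C" by (auto simp: Bseq_def)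
  have "f n \<le> C * (1 / r) ^ n" for n
  proof -
    have "f n * r ^ n \<le> C" using C[of n] by simp
    then have "f n * r ^ n * (1 / r) ^ n \<le> C * (1 / r) ^ n" using r by (simp add: mult_right_mono)
    then show ?thesis using r by (simp add: power_one_over)
  qed
  then show ?thesis unfolding exp_bounded_def by blast
qed

lemma conv_radius_ge_of_exp_bounded:
  assumes \<rho>: "0 < \<rho>" and nonneg: "\<And>n. 0 \<le> f n" and bound: "\<And>s. \<rho> < s \<Longrightarrow> exp_bounded f s"
  shows "ereal (1 / \<rho>) \<le> conv_radius f"
proof (rule conv_radius_geI_ex')
  fix r :: real assume r: "0 < r" "ereal r < ereal (1 / \<rho>)"
  define s where "s = (\<rho> + 1 / r) / 2"
  have "\<rho> < s" "s * r < 1" using r \<rho> unfolding s_def by (auto simp: field_simps)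
  then obtain C where C: "\<forall>n\<ge>1. f n \<le> C * s ^ n" using bound exp_bounded_def by blast
  have "summable (\<lambda>n. C * (s * r) ^ n)"
    using \<open>s * r < 1\<close> \<open>\<rho> < s\<close> \<rho> r by (intro summable_mult summable_geometric) auto
  then show "summable (\<lambda>n. f n * of_real r ^ n)"
  proof (rule summable_comparison_test'[where N = 1])
    fix n :: nat assume "1 \<le> n"
    then have "f n * r ^ n \<le> C * s ^ n * r ^ n" using C r by (intro mult_right_mono) auto
    then show "norm (f n * of_real r ^ n) \<le> C * (s * r) ^ n"
      using r nonneg[of n] by (simp add: power_mult_distrib ac_simps)
  qed
qed

section \<open>Growth of matrix powers\<close>

lemma smult_mat_mult_mat_vec:
  assumes "A \<in> carrier_mat n n" "v \<in> carrier_vec n"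
  shows "(c \<cdot>\<^sub>m A) *\<^sub>v v = c \<cdot>\<^sub>v (A *\<^sub>v v :: 'a :: comm_ring_1 vec)"
  using assms by (intro eq_vecI) (auto simp: scalar_prod_def sum_distrib_left ac_simps)

lemma eigenvector_smult_mat:
  assumes "A \<in> carrier_mat n n" "eigenvector A v ev"
  shows "eigenvector (c \<cdot>\<^sub>m A) v (c * ev :: 'a :: comm_ring_1)"
  using assms smult_mat_mult_mat_vec[OF assms(1)] unfolding eigenvector_def
  by (auto simp: smult_smult_assoc)

lemma smult_pow_mat:
  assumes A: "A \<in> carrier_mat n n"
  shows "(c \<cdot>\<^sub>m A) ^\<^sub>m k = (c ^ k) \<cdot>\<^sub>m (A ^\<^sub>m k :: 'a :: comm_ring_1 mat)"
proof (induction k)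
  case 0
  then show ?case using A by (auto intro!: eq_matI)
next
  case (Suc k)
  have "(c \<cdot>\<^sub>m A) ^\<^sub>m Suc k = (c ^ k \<cdot>\<^sub>m A ^\<^sub>m k) * (c \<cdot>\<^sub>m A)" using Suc by simp
  also have "\<dots> = c ^ k \<cdot>\<^sub>m (A ^\<^sub>m k * (c \<cdot>\<^sub>m A))"
    using A by (intro mult_smult_assoc_mat) auto
  also have "\<dots> = c ^ Suc k \<cdot>\<^sub>m (A ^\<^sub>m Suc k)"
    using A by (subst mult_smult_distrib[of _ n n]) (auto intro!: eq_matI simp: ac_simps)
  finally show ?case .
qed

lemma spectral_radius_pow_le_sum_norm:
  fixes A :: "complex mat"
  assumes A: "A \<in> carrier_mat n n" and n: "0 < n"
  shows "spectral_radius A ^ k \<le> (\<Sum>i<n. \<Sum>j<n. cmod ((A ^\<^sub>m k) $$ (i, j)))"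
proof -
  obtain ev where ev: "ev \<in> spectrum A" "cmod ev = spectral_radius A"
    using spectral_radius_mem_max(1)[OF A n] by auto
  then obtain v where v: "eigenvector A v ev" unfolding spectrum_def eigenvalue_def by auto
  have vc: "v \<in> carrier_vec n" "v \<noteq> 0\<^sub>v n" using v A unfolding eigenvector_def by auto
  define M where "M = Max ((\<lambda>i. cmod (v $ i)) ` {..<n})"
  have "M \<in> (\<lambda>i. cmod (v $ i)) ` {..<n}" unfolding M_def using n by (intro Max_in) auto
  then obtain i0 where i0: "i0 < n" "cmod (v $ i0) = M" by auto
  have M_ge: "cmod (v $ i) \<le> M" if "i < n" for i unfolding M_def using that by (intro Max_ge) auto
  obtain i1 where "i1 < n" "v $ i1 \<noteq> 0" using vc by (metis carrier_vecD eq_vecI index_zero_vec)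
  then have M_pos: "0 < M" using M_ge[of i1] by (meson less_le_trans zero_less_norm_iff)
  have "spectral_radius A ^ k * M = cmod ((A ^\<^sub>m k *\<^sub>v v) $ i0)"
    using eigenvector_pow[OF A v] i0 vc ev(2) by (simp add: norm_mult norm_power)
  also have "(A ^\<^sub>m k *\<^sub>v v) $ i0 = (\<Sum>j<n. (A ^\<^sub>m k) $$ (i0, j) * v $ j)"
    using i0 A vc by (simp add: scalar_prod_def lessThan_atLeast0)
  also have "cmod \<dots> \<le> (\<Sum>j<n. cmod ((A ^\<^sub>m k) $$ (i0, j)) * M)"
    by (rule order.trans[OF norm_sum sum_mono]) (auto simp: norm_mult intro!: mult_left_mono M_ge)
  also have "\<dots> = (\<Sum>j<n. cmod ((A ^\<^sub>m k) $$ (i0, j))) * M" by (simp add: sum_distrib_right)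
  finally have "spectral_radius A ^ k \<le> (\<Sum>j<n. cmod ((A ^\<^sub>m k) $$ (i0, j)))" using M_pos by simp
  also have "\<dots> \<le> (\<Sum>i<n. \<Sum>j<n. cmod ((A ^\<^sub>m k) $$ (i, j)))"
    using i0 by (intro member_le_sum) (auto intro: sum_nonneg)
  finally show ?thesis .
qed

text \<open>Above the spectral radius, the entries of the powers grow at most exponentially: rescaling
  by \<open>1 / s\<close> brings the spectral radius below 1, where the powers are bounded.\<close>

lemma entries_pow_le_if_spectral_radius_less:
  fixes A :: "complex mat"
  assumes A: "A \<in> carrier_mat n n" and s: "spectral_radius A < s" and n: "0 < n"
  shows "\<exists>C. \<forall>k i j. i < n \<longrightarrow> j < n \<longrightarrow> cmod ((A ^\<^sub>m k) $$ (i, j)) \<le> C * s ^ k"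
proof -
  have s_pos: "0 < s" using s spectral_radius_mem_max(1)[OF A n] by (smt (verit) imageE norm_ge_zero)
  define B where "B = complex_of_real (1 / s) \<cdot>\<^sub>m A"
  have B: "B \<in> carrier_mat n n" using A B_def by auto
  have "spectral_radius B < 1"
  proof -
    obtain mu where mu: "mu \<in> spectrum B" "cmod mu = spectral_radius B"
      using spectral_radius_mem_max(1)[OF B n] by auto
    then have "eigenvector (complex_of_real s \<cdot>\<^sub>m B) v (complex_of_real s * mu)" if "eigenvector B v mu" for v
      using eigenvector_smult_mat[OF B that] by blast
    moreover have "complex_of_real s \<cdot>\<^sub>m B = A"
      using A s_pos unfolding B_def by (auto intro!: eq_matI)
    ultimately have "complex_of_real s * mu \<in> spectrum A"
      using mu(1) unfolding spectrum_def eigenvalue_def by auto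
    then have "cmod (complex_of_real s * mu) \<le> spectral_radius A"
      by (intro spectral_radius_mem_max(2)[OF A n] imageI)
    then have "s * cmod mu \<le> spectral_radius A" using s_pos by (simp add: norm_mult)
    then have "s * cmod mu < s * 1" using s by linarith
    then show ?thesis using mu s_pos by (simp add: mult_less_cancel_left_pos)
  qed
  then obtain c where c: "\<And>k. norm_bound (B ^\<^sub>m k) c"
    using spectral_radius_jnf_norm_bound_less_1_upper_triangular[OF B] by auto
  have "cmod ((A ^\<^sub>m k) $$ (i, j)) \<le> c * s ^ k" if ij: "i < n" "j < n" for k i j
  proof -
    have "(B ^\<^sub>m k) $$ (i, j) = complex_of_real (1 / s) ^ k * (A ^\<^sub>m k) $$ (i, j)"
      using ij A unfolding B_def smult_pow_mat[OF A] by simp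
    then have "(A ^\<^sub>m k) $$ (i, j) = complex_of_real (s ^ k) * (B ^\<^sub>m k) $$ (i, j)"
      using s_pos by (simp add: field_simps power_divide)
    moreover have "cmod ((B ^\<^sub>m k) $$ (i, j)) \<le> c" using c[of k] ij B unfolding norm_bound_def by auto
    moreover have "cmod (complex_of_real s ^ k) = s ^ k" using s_pos by (simp add: norm_power)
    ultimately show ?thesis using s_pos by (simp add: norm_mult mult_left_mono mult.commute)
  qed
  then show ?thesis by blast
qed

section \<open>Walks and the spectral radius of a digraph\<close>

definition walks :: "'v set \<Rightarrow> ('v \<Rightarrow> 'v \<Rightarrow> bool) \<Rightarrow> nat \<Rightarrow> 'v list set" where
  "walks V E n = {p. length p = n \<and> set p \<subseteq> V \<and> successively E p}"

lemma finite_walks: "finite V \<Longrightarrow> finite (walks V E n)"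
  using finite_lists_length_eq[of V n] by (rule finite_subset[rotated]) (auto simp: walks_def)

lemma walks_mono: "V' \<subseteq> V \<Longrightarrow> (\<And>u v. E' u v \<Longrightarrow> E u v) \<Longrightarrow> walks V' E' n \<subseteq> walks V E n"
  unfolding walks_def by (auto elim: successively_mono)

definition walks_from_to :: "'v set \<Rightarrow> ('v \<Rightarrow> 'v \<Rightarrow> bool) \<Rightarrow> nat \<Rightarrow> 'v \<Rightarrow> 'v \<Rightarrow> 'v list set" where
  "walks_from_to V E k u v = {p \<in> walks V E (Suc k). hd p = u \<and> last p = v}"

lemma walks_from_to_0: "u \<in> V \<Longrightarrow> walks_from_to V E 0 u v = (if u = v then {[u]} else {})"
  unfolding walks_from_to_def walks_def by (auto simp: length_Suc_conv)

lemma walks_from_to_Suc: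
  assumes "v \<in> V"
  shows "walks_from_to V E (Suc k) u v = (\<Union>w\<in>{w\<in>V. E w v}. (\<lambda>q. q @ [v]) ` walks_from_to V E k u w)"
proof (intro equalityI subsetI)
  fix p assume p: "p \<in> walks_from_to V E (Suc k) u v"
  then have "p \<noteq> []" "last p = v" "length p = Suc (Suc k)"
    unfolding walks_from_to_def walks_def by auto
  then obtain q where pq: "p = q @ [v]" and "q \<noteq> []"
    by (metis append_butlast_last_id length_butlast diff_Suc_1 length_0_conv nat.distinct(1))
  then have "q \<in> walks_from_to V E k u (last q)" "last q \<in> V" "E (last q) v"
    using p unfolding pq walks_from_to_def walks_def by (auto simp: successively_append_iff)
  then show "p \<in> (\<Union>w\<in>{w\<in>V. E w v}. (\<lambda>q. q @ [v]) ` walks_from_to V E k u w)"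
    unfolding pq by blast
next
  fix p assume "p \<in> (\<Union>w\<in>{w\<in>V. E w v}. (\<lambda>q. q @ [v]) ` walks_from_to V E k u w)"
  then obtain w q where "w \<in> V" "E w v" "q \<in> walks_from_to V E k u w" "p = q @ [v]" by auto
  with assms show "p \<in> walks_from_to V E (Suc k) u v"
    unfolding walks_from_to_def walks_def by (auto simp: successively_append_iff hd_append)
qed

lemma finite_walks_from_to: "finite V \<Longrightarrow> finite (walks_from_to V E k u v)"
  by (rule finite_subset[OF _ finite_walks]) (auto simp: walks_from_to_def)

lemma card_walks_from_to_Suc:
  assumes V: "finite V" and v: "v \<in> V"
  shows "card (walks_from_to V E (Suc k) u v) = (\<Sum>w\<in>V. if E w v then card (walks_from_to V E k u w) else 0)"
proof -
  have "card (walks_from_to V E (Suc k) u v) = (\<Sum>w\<in>{w\<in>V. E w v}. card ((\<lambda>q. q @ [v]) ` walks_from_to V E k u w))"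
    unfolding walks_from_to_Suc[OF v] using V finite_walks_from_to[OF V]
    by (intro card_UN_disjoint) (auto simp: walks_from_to_def)
  also have "\<dots> = (\<Sum>w\<in>{w\<in>V. E w v}. card (walks_from_to V E k u w))"
    by (intro sum.cong refl card_image) (auto intro: inj_onI)
  finally show ?thesis using V by (simp add: sum.If_cases Int_def conj_commute)
qed

lemma card_walks_Suc:
  assumes V: "finite V"
  shows "card (walks V E (Suc k)) = (\<Sum>u\<in>V. \<Sum>v\<in>V. card (walks_from_to V E k u v))"
proof -
  have "p \<in> (\<Union>u\<in>V. \<Union>v\<in>V. walks_from_to V E k u v)" if p: "p \<in> walks V E (Suc k)" for p
  proof -
    have "p \<noteq> []" "set p \<subseteq> V" using p unfolding walks_def by auto
    then have "hd p \<in> V" "last p \<in> V" by auto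
    then show ?thesis using p unfolding walks_from_to_def by auto
  qed
  then have "walks V E (Suc k) = (\<Union>u\<in>V. \<Union>v\<in>V. walks_from_to V E k u v)"
    unfolding walks_from_to_def by auto
  then have "card (walks V E (Suc k)) = card (\<Union>u\<in>V. \<Union>v\<in>V. walks_from_to V E k u v)" by simp
  also have "\<dots> = (\<Sum>u\<in>V. card (\<Union>v\<in>V. walks_from_to V E k u v))"
    using V finite_walks_from_to[OF V] by (intro card_UN_disjoint) (auto simp: walks_from_to_def)
  also have "\<dots> = (\<Sum>u\<in>V. \<Sum>v\<in>V. card (walks_from_to V E k u v))"
    using V finite_walks_from_to[OF V]
    by (intro sum.cong refl card_UN_disjoint) (auto simp: walks_from_to_def)
  finally show ?thesis .
qed

lemma adjacency_mat:
  assumes V: "finite V"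
  obtains vs where "distinct vs" "set vs = V" "length vs = card V"
    "adjacency_mat V E = mat (card V) (card V) (\<lambda>(i, j). if E (vs ! i) (vs ! j) then 1 else 0)"
proof -
  define vs where "vs = (SOME vs. distinct vs \<and> set vs = V)"
  have "distinct vs \<and> set vs = V"
    unfolding vs_def by (rule someI_ex) (use finite_distinct_list[OF V] in auto)
  then have vs: "distinct vs" "set vs = V" by auto
  then have "length vs = card V" using distinct_card by fastforce
  then show ?thesis using that vs unfolding adjacency_mat_def vs_def[symmetric] Let_def by auto
qed

lemma adjacency_mat_carrier: "finite V \<Longrightarrow> adjacency_mat V E \<in> carrier_mat (card V) (card V)"
  by (rule adjacency_mat[of V E]) auto

lemma sum_norm_adjacency_mat_pow:
  assumes V: "finite V"
  shows "(\<Sum>i<card V. \<Sum>j<card V. cmod ((adjacency_mat V E ^\<^sub>m k) $$ (i, j))) = real (card (walks V E (Suc k)))"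
proof -
  obtain vs where vs: "distinct vs" "set vs = V" "length vs = card V"
    and A: "adjacency_mat V E = mat (card V) (card V) (\<lambda>(i, j). if E (vs ! i) (vs ! j) then 1 else 0)"
    using adjacency_mat[OF V] .
  let ?A = "adjacency_mat V E"
  have A_carrier: "?A \<in> carrier_mat (card V) (card V)" by (rule adjacency_mat_carrier[OF V])
  have "set vs = (!) vs ` {..<length vs}" "inj_on ((!) vs) {..<length vs}"
    using vs(1) by (auto simp: in_set_conv_nth inj_on_nth)
  then have sum_vs: "sum f V = (\<Sum>l<card V. f (vs ! l))" for f :: "'a \<Rightarrow> 'b :: comm_monoid_add"
    using vs(2,3) sum.reindex[of "(!) vs" "{..<length vs}" f] by simp
  have entry: "(?A ^\<^sub>m k) $$ (i, j) = of_nat (card (walks_from_to V E k (vs ! i) (vs ! j)))"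
    if "i < card V" "j < card V" for i j k
    using that
  proof (induction k arbitrary: j)
    case 0
    then show ?case using vs nth_eq_iff_index_eq[of vs i j] walks_from_to_0[of "vs ! i" V]
      by (auto simp: A)
  next
    case (Suc k)
    have "(?A ^\<^sub>m Suc k) $$ (i, j) = (\<Sum>l<card V. (?A ^\<^sub>m k) $$ (i, l) * ?A $$ (l, j))"
      using Suc.prems A_carrier by (simp add: scalar_prod_def lessThan_atLeast0 ac_simps)
    also have "\<dots> = of_nat (\<Sum>w\<in>V. if E w (vs ! j) then card (walks_from_to V E k (vs ! i) w) else 0)"
      using Suc unfolding sum_vs by (auto simp: A of_nat_sum intro!: sum.cong)
    moreover have "vs ! j \<in> V" using Suc.prems vs by auto
    ultimately show ?case using card_walks_from_to_Suc[OF V, of "vs ! j"] by (simp add: of_nat_sum)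
  qed
  have "(\<Sum>i<card V. \<Sum>j<card V. cmod ((?A ^\<^sub>m k) $$ (i, j)))
      = real (\<Sum>u\<in>V. \<Sum>v\<in>V. card (walks_from_to V E k u v))"
    unfolding sum_vs using entry by (simp add: of_nat_sum)
  then show ?thesis using card_walks_Suc[OF V] by simp
qed

lemma digraph_spectral_radius_nonneg: "finite V \<Longrightarrow> V \<noteq> {} \<Longrightarrow> 0 \<le> digraph_spectral_radius V E"
  unfolding digraph_spectral_radius_def
  using spectral_radius_mem_max(1)[OF adjacency_mat_carrier] by (metis card_gt_0_iff imageE norm_ge_zero)

lemma digraph_spectral_radius_pow_le_card_walks:
  "finite V \<Longrightarrow> V \<noteq> {} \<Longrightarrow> digraph_spectral_radius V E ^ k \<le> real (card (walks V E (Suc k)))"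
  unfolding digraph_spectral_radius_def
  using spectral_radius_pow_le_sum_norm[OF adjacency_mat_carrier] sum_norm_adjacency_mat_pow
  by (metis card_gt_0_iff)

lemma exp_bounded_card_walks:
  assumes V: "finite V" "V \<noteq> {}" and s: "digraph_spectral_radius V E < s"
  shows "exp_bounded (\<lambda>n. real (card (walks V E n))) s"
proof -
  let ?A = "adjacency_mat V E" and ?N = "card V"
  have s_pos: "0 < s" using digraph_spectral_radius_nonneg[OF V, of E] s by linarith
  obtain C where C: "\<And>k i j. i < ?N \<Longrightarrow> j < ?N \<Longrightarrow> cmod ((?A ^\<^sub>m k) $$ (i, j)) \<le> C * s ^ k"
    using entries_pow_le_if_spectral_radius_less[OF adjacency_mat_carrier[OF V(1)]] s V
    unfolding digraph_spectral_radius_def by (metis card_gt_0_iff)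
  have "real (card (walks V E n)) \<le> (real ?N * real ?N * C / s) * s ^ n" if n: "1 \<le> n" for n
  proof -
    obtain k where k: "n = Suc k" using n by (cases n) auto
    have "real (card (walks V E (Suc k))) \<le> (\<Sum>i<?N. \<Sum>j<?N. C * s ^ k)"
      unfolding sum_norm_adjacency_mat_pow[OF V(1), symmetric] using C by (intro sum_mono) auto
    then show ?thesis using s_pos k by simp
  qed
  then show ?thesis unfolding exp_bounded_def by blast
qed

lemma digraph_spectral_radius_le_if_exp_bounded:
  assumes V: "finite V" "V \<noteq> {}" and s: "0 < s"
    and bound: "exp_bounded (\<lambda>n. real (card (walks V E n))) s"
  shows "digraph_spectral_radius V E \<le> s"
  using exp_bounded_shift[OF bound, of 1] s digraph_spectral_radius_nonneg[OF V]
  by (rule exp_bounded_lower_bound) (simp add: digraph_spectral_radius_pow_le_card_walks[OF V])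

section \<open>Trace equivalence\<close>

locale trace_alphabet =
  fixes Sig :: "'a set" and I :: "('a \<times> 'a) set"
  assumes trace_monoid: "trace_monoid Sig I"
begin

abbreviation D where "D \<equiv> dep Sig I"

lemma finite_Sig: "finite Sig"
  using trace_monoid unfolding trace_monoid_def by auto

lemma indep_sym: "(a, b) \<in> I \<Longrightarrow> (b, a) \<in> I"
  using trace_monoid unfolding trace_monoid_def sym_def by auto

lemma indep_irrefl: "(a, a) \<notin> I"
  using trace_monoid unfolding trace_monoid_def irrefl_def by auto

lemma dep_iff: "(a, b) \<in> D \<longleftrightarrow> a \<in> Sig \<and> b \<in> Sig \<and> (a, b) \<notin> I"
  unfolding dep_def by auto

lemma dep_refl: "a \<in> Sig \<Longrightarrow> (a, a) \<in> D"
  using indep_irrefl dep_iff by auto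

lemma trace_eq_refl [simp]: "trace_eq I u u"
  unfolding trace_eq_def by simp

lemma trace_eq_trans: "trace_eq I u v \<Longrightarrow> trace_eq I v w \<Longrightarrow> trace_eq I u w"
  unfolding trace_eq_def by simp

lemma trace_eq_swap: "(a, b) \<in> I \<Longrightarrow> trace_eq I (p @ [a, b] @ q) (p @ [b, a] @ q)"
  unfolding trace_eq_def using swap_step.intros[of a b I p q] by auto

lemma trace_eq_sym: "trace_eq I u v \<Longrightarrow> trace_eq I v u"
proof -
  have "symp (swap_step I)"
    by (rule sympI, erule swap_step.cases) (metis indep_sym swap_step.intros)
  then show "trace_eq I u v \<Longrightarrow> trace_eq I v u"
    unfolding trace_eq_def by (rule sympD[OF symp_rtranclp])
qed

lemma trace_eq_invariant:
  assumes "trace_eq I u v"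
    and "\<And>p q a b. (a, b) \<in> I \<Longrightarrow> f (p @ [a, b] @ q) = f (p @ [b, a] @ q)"
  shows "f u = f v"
  using assms(1) unfolding trace_eq_def
proof (induction rule: rtranclp_induct)
  case (step w w')
  from step.hyps(2) show ?case
    by cases (metis step.IH assms(2))
qed simp

lemma trace_eq_map:
  assumes "trace_eq I u v"
    and "\<And>p q a b. (a, b) \<in> I \<Longrightarrow> trace_eq I (g (p @ [a, b] @ q)) (g (p @ [b, a] @ q))"
  shows "trace_eq I (g u) (g v)"
  using assms(1) unfolding trace_eq_def
  by (induction rule: rtranclp_induct)
    (auto elim!: swap_step.cases intro: rtranclp_trans assms(2)[unfolded trace_eq_def])

lemma trace_eq_length: "trace_eq I u v \<Longrightarrow> length u = length v"
  by (erule trace_eq_invariant) simp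

lemma trace_eq_set: "trace_eq I u v \<Longrightarrow> set u = set v"
  by (erule trace_eq_invariant) auto

lemma trace_eq_append_left: "trace_eq I u v \<Longrightarrow> trace_eq I (w @ u) (w @ v)"
  by (erule trace_eq_map) (metis append.assoc trace_eq_swap)

lemma trace_eq_append_right: "trace_eq I u v \<Longrightarrow> trace_eq I (u @ w) (v @ w)"
  by (erule trace_eq_map) (metis append.assoc trace_eq_swap)

lemma trace_eq_append: "trace_eq I u u' \<Longrightarrow> trace_eq I v v' \<Longrightarrow> trace_eq I (u @ v) (u' @ v')"
  by (meson trace_eq_append_left trace_eq_append_right trace_eq_trans)

lemma trace_eq_rev: "trace_eq I u v \<Longrightarrow> trace_eq I (rev u) (rev v)"
  by (erule trace_eq_map) (use trace_eq_swap indep_sym in fastforce)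

lemma trace_eq_remove1: "trace_eq I u v \<Longrightarrow> trace_eq I (remove1 x u) (remove1 x v)"
proof (erule trace_eq_map)
  fix p q a b assume ab: "(a, b) \<in> I"
  then have "a \<noteq> b" using indep_irrefl by auto
  then show "trace_eq I (remove1 x (p @ [a, b] @ q)) (remove1 x (p @ [b, a] @ q))"
    using trace_eq_swap[OF ab, of "remove1 x p" q] trace_eq_swap[OF ab, of p "remove1 x q"]
    by (cases "x \<in> set p"; cases "x = a"; cases "x = b") (auto simp: remove1_append)
qed

lemma trace_eq_cancel_left: "trace_eq I (w @ u) (w @ v) \<Longrightarrow> trace_eq I u v"
proof (induction w)
  case (Cons a w)
  then show ?case using trace_eq_remove1[of "a # w @ u" "a # w @ v" a] by simp
qed simp

lemma trace_eq_cancel_right: "trace_eq I (u @ w) (v @ w) \<Longrightarrow> trace_eq I u v"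
  by (metis rev_append rev_rev_ident trace_eq_cancel_left trace_eq_rev)

lemma trace_eq_commute_last: "\<forall>b\<in>set p. (b, x) \<in> I \<Longrightarrow> trace_eq I (p @ [x]) (x # p)"
proof (induction p)
  case (Cons b p)
  then have "trace_eq I (b # p @ [x]) (b # x # p)"
    using trace_eq_append_left[of "p @ [x]" "x # p" "[b]"] by simp
  moreover have "trace_eq I (b # x # p) (x # b # p)"
    using trace_eq_swap[of b x "[]" p] Cons.prems by simp
  ultimately show ?case using trace_eq_trans by auto
qed simp

lemma trace_eq_pairwise_indep:
  "distinct u \<Longrightarrow> distinct v \<Longrightarrow> set u = set v \<Longrightarrow>
   \<forall>a\<in>set u. \<forall>b\<in>set u. a \<noteq> b \<longrightarrow> (a, b) \<in> I \<Longrightarrow> trace_eq I u v"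
proof (induction u arbitrary: v)
  case (Cons x u)
  then obtain v1 v2 where v: "v = v1 @ x # v2" by (metis list.set_intros(1) split_list)
  have "set u = set (v1 @ v2)" using Cons.prems v by auto
  then have "trace_eq I u (v1 @ v2)" using Cons v by auto
  then have "trace_eq I (x # u) (x # v1 @ v2)" using trace_eq_append_left[of _ _ "[x]"] by simp
  moreover have "trace_eq I (v1 @ [x]) (x # v1)" using Cons.prems v by (intro trace_eq_commute_last) auto
  then have "trace_eq I (x # v1 @ v2) (v1 @ [x] @ v2)"
    using trace_eq_append_right[of "v1 @ [x]" "x # v1" v2] trace_eq_sym by auto
  ultimately show ?case using v trace_eq_trans by auto
qed simp

text \<open>The letters that can be brought to the front of a word by commutations; they are the
  letters of the first clique of its normal form.\<close>

definition min_letters :: "'a list \<Rightarrow> 'a set" where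
  "min_letters w = {a \<in> set w. \<forall>b \<in> set (takeWhile (\<lambda>x. x \<noteq> a) w). (b, a) \<in> I}"

lemma takeWhile_neq_append_notin:
  "a \<notin> set p \<Longrightarrow> takeWhile (\<lambda>x. x \<noteq> a) (p @ q) = p @ takeWhile (\<lambda>x. x \<noteq> a) q"
  by (induction p) auto

lemma takeWhile_neq_append_in:
  "a \<in> set p \<Longrightarrow> takeWhile (\<lambda>x. x \<noteq> a) (p @ q) = takeWhile (\<lambda>x. x \<noteq> a) p"
  by (induction p) auto

lemma trace_eq_min_letters: "trace_eq I u v \<Longrightarrow> min_letters u = min_letters v"
proof (erule trace_eq_invariant)
  fix p q x y assume xy: "(x, y) \<in> I"
  have "x \<noteq> y" using xy indep_irrefl by auto
  have "a \<in> min_letters (p @ [x, y] @ q) \<longleftrightarrow> a \<in> min_letters (p @ [y, x] @ q)" for a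
  proof (cases "a \<in> set p")
    case True
    then show ?thesis unfolding min_letters_def by (simp add: takeWhile_neq_append_in)
  next
    case False
    then show ?thesis
      using \<open>x \<noteq> y\<close> xy indep_sym[OF xy] unfolding min_letters_def
      by (cases "a = x"; cases "a = y") (auto simp: takeWhile_neq_append_notin)
  qed
  then show "min_letters (p @ [x, y] @ q) = min_letters (p @ [y, x] @ q)" by blast
qed

end

section \<open>Cartier-Foata normal forms\<close>

context trace_alphabet
begin

lemma clique_subset: "c \<in> cliques Sig I \<Longrightarrow> c \<subseteq> Sig"
  unfolding cliques_def by auto

lemma clique_nonempty: "c \<in> cliques Sig I \<Longrightarrow> c \<noteq> {}"
  unfolding cliques_def by auto

lemma finite_clique: "c \<in> cliques Sig I \<Longrightarrow> finite c"
  using clique_subset finite_Sig finite_subset by blast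

lemma card_clique_pos: "c \<in> cliques Sig I \<Longrightarrow> 0 < card c"
  using finite_clique clique_nonempty card_gt_0_iff by blast

lemma card_clique_le: "c \<in> cliques Sig I \<Longrightarrow> card c \<le> card Sig"
  using clique_subset finite_Sig card_mono by blast

lemma singleton_clique: "a \<in> Sig \<Longrightarrow> {a} \<in> cliques Sig I"
  unfolding cliques_def by auto

lemma clique_insert:
  assumes c: "c \<in> cliques Sig I" and a: "a \<in> Sig" and nd: "\<forall>b\<in>c. (b, a) \<notin> D"
  shows "insert a c \<in> cliques Sig I" "a \<notin> c" "\<forall>b\<in>c. (b, a) \<in> I"
proof -
  show "a \<notin> c" using nd dep_refl[OF a] by auto
  show indep: "\<forall>b\<in>c. (b, a) \<in> I" using nd a clique_subset[OF c] dep_iff by auto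
  then show "insert a c \<in> cliques Sig I" using c a indep_sym unfolding cliques_def by auto
qed

lemma clique_word: "finite c \<Longrightarrow> distinct (clique_word c) \<and> set (clique_word c) = c"
  unfolding clique_word_def by (rule someI_ex) (metis finite_distinct_list)

lemma set_clique_word [simp]: "c \<in> cliques Sig I \<Longrightarrow> set (clique_word c) = c"
  using clique_word finite_clique by blast

lemma length_clique_word: "c \<in> cliques Sig I \<Longrightarrow> length (clique_word c) = card c"
  using clique_word finite_clique distinct_card by metis

lemma clique_word_singleton: "clique_word {a} = [a]"
proof -
  have w: "distinct (clique_word {a})" "set (clique_word {a}) = {a}" using clique_word[of "{a}"] by auto
  then have "length (clique_word {a}) = 1" using distinct_card by fastforce
  then obtain x where "clique_word {a} = [x]" by (metis One_nat_def length_0_conv length_Suc_conv)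
  then show ?thesis using w by simp
qed

lemma clique_word_insert:
  assumes c: "c \<in> cliques Sig I" and a: "a \<notin> c" "\<forall>b\<in>c. (b, a) \<in> I"
  shows "trace_eq I (clique_word (insert a c)) (clique_word c @ [a])"
proof -
  have "finite (insert a c)" using finite_clique[OF c] by auto
  then show ?thesis
    using clique_word[of "insert a c"] clique_word[OF finite_clique[OF c]] c a indep_sym
    by (intro trace_eq_pairwise_indep) (auto simp: cliques_def)
qed

definition normal_seq :: "'a set list \<Rightarrow> bool" where
  "normal_seq cs \<longleftrightarrow> set cs \<subseteq> cliques Sig I \<and> successively (clique_arrow Sig I) cs"

definition word_of :: "'a set list \<Rightarrow> 'a list" where
  "word_of cs = concat (map clique_word cs)"

lemma word_of_simps [simp]:
  "word_of [] = []" "word_of (c # cs) = clique_word c @ word_of cs"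
  "word_of (cs @ ds) = word_of cs @ word_of ds"
  unfolding word_of_def by auto

lemma word_of_take_drop: "word_of cs = word_of (take k cs) @ word_of (drop k cs)"
  by (metis append_take_drop_id word_of_simps(3))

lemma is_normal_form_iff: "is_normal_form Sig I cs w \<longleftrightarrow> normal_seq cs \<and> trace_eq I (word_of cs) w"
  unfolding is_normal_form_def normal_seq_def word_of_def successively_conv_nth by auto

lemma normal_seq_Nil [simp]: "normal_seq []"
  unfolding normal_seq_def by simp

lemma normal_seq_Cons:
  "normal_seq (c # cs) \<longleftrightarrow> c \<in> cliques Sig I \<and> normal_seq cs \<and> (cs \<noteq> [] \<longrightarrow> clique_arrow Sig I c (hd cs))"
  unfolding normal_seq_def successively_Cons by auto

lemma normal_seq_take_drop:
  assumes "normal_seq cs" shows "normal_seq (take k cs)" "normal_seq (drop k cs)"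
  using assms successively_append_iff[of _ "take k cs" "drop k cs"] unfolding normal_seq_def
  by (auto dest: in_set_takeD in_set_dropD)

lemma normal_seq_cliques: "normal_seq cs \<Longrightarrow> c \<in> set cs \<Longrightarrow> c \<in> cliques Sig I"
  unfolding normal_seq_def by auto

lemma length_word_of: "set cs \<subseteq> cliques Sig I \<Longrightarrow> length (word_of cs) = sum_list (map card cs)"
  by (induction cs) (auto simp: length_clique_word)

lemma set_word_of: "set cs \<subseteq> cliques Sig I \<Longrightarrow> set (word_of cs) = \<Union> (set cs)"
  by (induction cs) auto

lemma set_word_of_subset: "set cs \<subseteq> cliques Sig I \<Longrightarrow> set (word_of cs) \<subseteq> Sig"
  using set_word_of clique_subset by blast

lemma word_of_eq_Nil_iff: "set cs \<subseteq> cliques Sig I \<Longrightarrow> word_of cs = [] \<longleftrightarrow> cs = []"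
  by (cases cs) (auto dest: clique_nonempty simp flip: set_empty)

lemma length_le_length_word_of: "set cs \<subseteq> cliques Sig I \<Longrightarrow> length cs \<le> length (word_of cs)"
  by (induction cs) (auto simp: length_clique_word dest!: card_clique_pos)

lemma dep_before_letter_not_in_head:
  "normal_seq (c # cs) \<Longrightarrow> a \<in> set (word_of (c # cs)) \<Longrightarrow> a \<notin> c \<Longrightarrow>
   \<exists>b\<in>set (takeWhile (\<lambda>x. x \<noteq> a) (word_of (c # cs))). (b, a) \<in> D"
proof (induction cs arbitrary: c)
  case (Cons c' cs)
  have c: "c \<in> cliques Sig I" using Cons.prems normal_seq_Cons by auto
  then have "a \<notin> set (clique_word c)" using Cons.prems(3) by simp
  then have tw: "takeWhile (\<lambda>x. x \<noteq> a) (word_of (c # c' # cs))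
      = clique_word c @ takeWhile (\<lambda>x. x \<noteq> a) (word_of (c' # cs))"
    using takeWhile_neq_append_notin by simp
  show ?case
  proof (cases "a \<in> c'")
    case True
    have "clique_arrow Sig I c c'" using Cons.prems(1) normal_seq_Cons by auto
    then obtain b where "b \<in> c" "(b, a) \<in> D" using True unfolding clique_arrow_def by auto
    then show ?thesis unfolding tw using c by auto
  next
    case False
    have "normal_seq (c' # cs)" "a \<in> set (word_of (c' # cs))"
      using Cons.prems \<open>a \<notin> set (clique_word c)\<close> normal_seq_Cons by auto
    then obtain b where "b \<in> set (takeWhile (\<lambda>x. x \<noteq> a) (word_of (c' # cs)))" "(b, a) \<in> D"
      using Cons.IH False by blast
    then show ?thesis unfolding tw by auto
  qed
qed (auto simp: normal_seq_Cons)

lemma min_letters_word_of: assumes "normal_seq (c # cs)" shows "min_letters (word_of (c # cs)) = c"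
proof
  have c: "c \<in> cliques Sig I" using assms normal_seq_Cons by auto
  show "c \<subseteq> min_letters (word_of (c # cs))"
  proof
    fix a assume a: "a \<in> c"
    then have "takeWhile (\<lambda>x. x \<noteq> a) (word_of (c # cs)) = takeWhile (\<lambda>x. x \<noteq> a) (clique_word c)"
      using c takeWhile_neq_append_in by simp
    moreover have "(b, a) \<in> I" if "b \<in> set (takeWhile (\<lambda>x. x \<noteq> a) (clique_word c))" for b
    proof -
      have "b \<in> c" "b \<noteq> a" using set_takeWhileD[OF that] c by auto
      then show ?thesis using a c unfolding cliques_def by auto
    qed
    ultimately show "a \<in> min_letters (word_of (c # cs))" unfolding min_letters_def using a c by auto
  qed
  show "min_letters (word_of (c # cs)) \<subseteq> c"
  proof
    fix a assume a: "a \<in> min_letters (word_of (c # cs))"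
    show "a \<in> c"
    proof (rule ccontr)
      assume "a \<notin> c"
      then obtain b where "b \<in> set (takeWhile (\<lambda>x. x \<noteq> a) (word_of (c # cs)))" "(b, a) \<in> D"
        using dep_before_letter_not_in_head[OF assms] a unfolding min_letters_def by blast
      then show False using a unfolding min_letters_def dep_iff by auto
    qed
  qed
qed

theorem normal_seq_unique:
  "normal_seq cs \<Longrightarrow> normal_seq ds \<Longrightarrow> trace_eq I (word_of cs) (word_of ds) \<Longrightarrow> cs = ds"
proof (induction cs arbitrary: ds)
  case Nil
  then have "word_of ds = []" using trace_eq_length by fastforce
  then show ?case using word_of_eq_Nil_iff Nil.prems normal_seq_def by auto
next
  case (Cons c cs)
  have "word_of (c # cs) \<noteq> []" using word_of_eq_Nil_iff Cons.prems normal_seq_def by blast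
  then have "word_of ds \<noteq> []" using trace_eq_length Cons.prems by fastforce
  then obtain d ds' where ds: "ds = d # ds'" by (cases ds) auto
  have "c = d"
    using min_letters_word_of[OF Cons.prems(1)] min_letters_word_of[of d ds'] Cons.prems ds
      trace_eq_min_letters by metis
  then have "trace_eq I (word_of cs) (word_of ds')"
    using Cons.prems ds trace_eq_cancel_left by simp
  then show ?case using Cons.IH Cons.prems ds \<open>c = d\<close> normal_seq_Cons by blast
qed

text \<open>One plus the index of the last clique containing a letter dependent on \<open>a\<close>, or 0 if
  there is none: the position where an appended letter \<open>a\<close> lands in the normal form.\<close>

fun level :: "'a set list \<Rightarrow> 'a \<Rightarrow> nat" where
  "level [] a = 0"
| "level (c # cs) a =
     (if 0 < level cs a then Suc (level cs a) else if \<exists>b\<in>c. (b, a) \<in> D then 1 else 0)"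

lemma level_le: "level cs a \<le> length cs"
  by (induction cs) auto

lemma not_dep_from_level: "level cs a \<le> k \<Longrightarrow> k < length cs \<Longrightarrow> b \<in> cs ! k \<Longrightarrow> (b, a) \<notin> D"
proof (induction cs arbitrary: k)
  case (Cons c cs)
  then show ?case by (cases k) (auto split: if_splits)
qed simp

lemma dep_below_level: "0 < level cs a \<Longrightarrow> \<exists>b\<in>cs ! (level cs a - 1). (b, a) \<in> D"
  by (induction cs) (auto simp: nth_Cons' split: if_splits)

lemma less_level: "j < length cs \<Longrightarrow> b \<in> cs ! j \<Longrightarrow> (b, a) \<in> D \<Longrightarrow> j < level cs a"
  using not_dep_from_level not_less by blast

definition nf_insert :: "'a set list \<Rightarrow> 'a \<Rightarrow> 'a set list" where
  "nf_insert cs a =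
     (if level cs a < length cs then cs[level cs a := insert a (cs ! level cs a)] else cs @ [{a}])"

lemma length_nf_insert: "length cs \<le> length (nf_insert cs a)"
  unfolding nf_insert_def by auto

lemma nth_nf_insert_mono: "k < length cs \<Longrightarrow> cs ! k \<subseteq> nf_insert cs a ! k"
  unfolding nf_insert_def by (auto simp: nth_list_update nth_append)

lemma in_nf_insert_level: "level cs a < length (nf_insert cs a) \<and> a \<in> nf_insert cs a ! level cs a"
  unfolding nf_insert_def using level_le[of cs a] by (auto simp: nth_append)

lemma clique_arrow_insert: "clique_arrow Sig I c d \<Longrightarrow> \<exists>b\<in>c. (b, a) \<in> D \<Longrightarrow> clique_arrow Sig I c (insert a d)"
  unfolding clique_arrow_def by auto

lemma clique_arrow_mono: "clique_arrow Sig I c d \<Longrightarrow> c \<subseteq> c' \<Longrightarrow> clique_arrow Sig I c' d"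
  unfolding clique_arrow_def by blast

lemma normal_seq_insert_at_level:
  assumes cs: "normal_seq cs" and a: "a \<in> Sig" and k: "level cs a < length cs"
  shows "normal_seq (cs[level cs a := insert a (cs ! level cs a)])" (is "normal_seq ?cs")
proof -
  let ?k = "level cs a"
  have cl: "set cs \<subseteq> cliques Sig I"
    and ar: "\<And>i. Suc i < length cs \<Longrightarrow> clique_arrow Sig I (cs ! i) (cs ! Suc i)"
    using cs unfolding normal_seq_def successively_conv_nth by auto
  have "cs ! ?k \<in> cliques Sig I" using cl k by auto
  then have "set ?cs \<subseteq> cliques Sig I"
    using cl clique_insert[OF _ a] not_dep_from_level[OF order.refl k]
    by (auto dest: set_update_subset_insert[THEN subsetD])
  moreover have "clique_arrow Sig I (?cs ! i) (?cs ! Suc i)" if i: "Suc i < length cs" for i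
  proof -
    consider "Suc i = ?k" | "i = ?k" | "Suc i \<noteq> ?k" "i \<noteq> ?k" by blast
    then show ?thesis
    proof cases
      case 1
      then have "\<exists>b\<in>cs ! i. (b, a) \<in> D" using dep_below_level[of cs a] unfolding 1[symmetric] by simp
      then show ?thesis using clique_arrow_insert[OF ar[OF i]] 1 k by (simp add: nth_list_update)
    next
      case 2
      then show ?thesis using clique_arrow_mono[OF ar[OF i]] k by (auto simp: nth_list_update)
    qed (use ar[OF i] in \<open>simp add: nth_list_update\<close>)
  qed
  ultimately show ?thesis unfolding normal_seq_def successively_conv_nth by simp
qed

lemma normal_seq_append_at_level:
  assumes cs: "normal_seq cs" and a: "a \<in> Sig" and k: "level cs a = length cs"
  shows "normal_seq (cs @ [{a}])"
proof (cases "cs = []")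
  case False
  then have "\<exists>b\<in>last cs. (b, a) \<in> D" using dep_below_level[of cs a] k by (simp add: last_conv_nth)
  then have "clique_arrow Sig I (last cs) {a}" unfolding clique_arrow_def by auto
  then show ?thesis using cs False singleton_clique[OF a] unfolding normal_seq_def
    by (auto simp: successively_append_iff)
qed (use singleton_clique[OF a] in \<open>simp add: normal_seq_def\<close>)

lemma normal_seq_nf_insert: "normal_seq cs \<Longrightarrow> a \<in> Sig \<Longrightarrow> normal_seq (nf_insert cs a)"
  using normal_seq_insert_at_level normal_seq_append_at_level level_le[of cs a]
  unfolding nf_insert_def by (auto simp: le_less)

lemma trace_eq_nf_insert:
  assumes cs: "normal_seq cs" and a: "a \<in> Sig"
  shows "trace_eq I (word_of (nf_insert cs a)) (word_of cs @ [a])"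
proof (cases "level cs a < length cs")
  case True
  let ?k = "level cs a"
  let ?L = "word_of (take ?k cs)" and ?R = "word_of (drop (Suc ?k) cs)"
  have cl: "set cs \<subseteq> cliques Sig I" using cs normal_seq_def by auto
  then have k: "cs ! ?k \<in> cliques Sig I" using True by auto
  have dec: "word_of cs = ?L @ clique_word (cs ! ?k) @ ?R"
    using True by (subst id_take_nth_drop[OF True]) simp
  have "nf_insert cs a = take ?k cs @ insert a (cs ! ?k) # drop (Suc ?k) cs"
    using True unfolding nf_insert_def by (simp add: upd_conv_take_nth_drop)
  then have ins: "word_of (nf_insert cs a) = ?L @ clique_word (insert a (cs ! ?k)) @ ?R"
    by simp
  have "trace_eq I (clique_word (insert a (cs ! ?k))) (clique_word (cs ! ?k) @ [a])"
    using clique_word_insert[OF k] clique_insert[OF k a] not_dep_from_level[OF order.refl True] by auto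
  then have "trace_eq I (clique_word (insert a (cs ! ?k)) @ ?R) (clique_word (cs ! ?k) @ [a] @ ?R)"
    using trace_eq_append_right by fastforce
  moreover have "\<forall>b\<in>set ?R. (b, a) \<in> I"
  proof
    fix b assume "b \<in> set ?R"
    moreover have "set (drop (Suc ?k) cs) \<subseteq> cliques Sig I" using cl by (auto dest: in_set_dropD)
    ultimately obtain c where "c \<in> set (drop (Suc ?k) cs)" "b \<in> c" using set_word_of by auto
    then obtain j where "j < length (drop (Suc ?k) cs)" "b \<in> drop (Suc ?k) cs ! j"
      by (auto simp: in_set_conv_nth)
    then have j: "Suc ?k + j < length cs" "b \<in> cs ! (Suc ?k + j)" by auto
    then have "b \<in> Sig" using cl clique_subset by (meson nth_mem subsetD)
    then show "(b, a) \<in> I" using not_dep_from_level[of cs a "Suc ?k + j"] j a dep_iff by auto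
  qed
  then have "trace_eq I (clique_word (cs ! ?k) @ [a] @ ?R) (clique_word (cs ! ?k) @ ?R @ [a])"
    using trace_eq_commute_last trace_eq_sym trace_eq_append_left by (metis append_Cons append_Nil)
  ultimately show ?thesis unfolding ins dec using trace_eq_trans trace_eq_append_left by fastforce
next
  case False
  then show ?thesis unfolding nf_insert_def by (simp add: clique_word_singleton)
qed

lemma foldl_nf_insert:
  "normal_seq cs \<Longrightarrow> set u \<subseteq> Sig \<Longrightarrow>
   normal_seq (foldl nf_insert cs u) \<and> trace_eq I (word_of (foldl nf_insert cs u)) (word_of cs @ u)"
proof (induction u arbitrary: cs)
  case (Cons a u)
  then have "normal_seq (nf_insert cs a)" "trace_eq I (word_of (nf_insert cs a)) (word_of cs @ [a])"
    using normal_seq_nf_insert trace_eq_nf_insert by auto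
  then show ?case using Cons trace_eq_append_right trace_eq_trans by fastforce
qed simp

definition nf_of :: "'a list \<Rightarrow> 'a set list" where
  "nf_of w = foldl nf_insert [] w"

lemma nf_of: "set w \<subseteq> Sig \<Longrightarrow> normal_seq (nf_of w) \<and> trace_eq I (word_of (nf_of w)) w"
  using foldl_nf_insert[of "[]" w] unfolding nf_of_def by simp

lemma length_foldl_nf_insert: "length cs \<le> length (foldl nf_insert cs u)"
  by (induction u arbitrary: cs) (auto intro: le_trans length_nf_insert)

lemma nth_foldl_nf_insert_mono:
  "k < length cs \<Longrightarrow> k < length (foldl nf_insert cs u) \<and> cs ! k \<subseteq> foldl nf_insert cs u ! k"
proof (induction u arbitrary: cs)
  case (Cons a u)
  have "k < length (nf_insert cs a)" using Cons.prems length_nf_insert less_le_trans by blast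
  then show ?case using Cons.IH nth_nf_insert_mono[OF Cons.prems] by fastforce
qed simp

lemma length_word_of_le_foldl_nf_insert_prefix:
  assumes cs: "normal_seq cs" and u: "set u \<subseteq> Sig"
  shows "length (word_of cs) \<le> length (word_of (take (length cs) (foldl nf_insert cs u)))"
proof -
  let ?cs = "foldl nf_insert cs u"
  have cl: "set ?cs \<subseteq> cliques Sig I" using foldl_nf_insert[OF cs u] normal_seq_def by auto
  have "card (cs ! k) \<le> card (take (length cs) ?cs ! k)" if k: "k < length cs" for k
  proof -
    have "k < length ?cs" "cs ! k \<subseteq> ?cs ! k" using nth_foldl_nf_insert_mono[OF k] by auto
    moreover from this have "finite (?cs ! k)" using cl finite_clique nth_mem by blast
    ultimately show ?thesis using k by (simp add: card_mono)
  qed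
  then have "sum_list (map card cs) \<le> sum_list (map card (take (length cs) ?cs))"
    using length_foldl_nf_insert[of cs u] by (intro sum_list_mono2) auto
  moreover have "length (word_of (take (length cs) ?cs)) = sum_list (map card (take (length cs) ?cs))"
    using order.trans[OF set_take_subset cl] by (rule length_word_of)
  moreover have "length (word_of cs) = sum_list (map card cs)"
    using cs unfolding normal_seq_def by (intro length_word_of) simp
  ultimately show ?thesis by linarith
qed

text \<open>Appending letters never changes the first clique once every letter occurs in a later one.\<close>

definition tail_covers_Sig :: "'a set list \<Rightarrow> bool" where
  "tail_covers_Sig cs \<longleftrightarrow> (\<forall>b\<in>Sig. \<exists>j. 1 \<le> j \<and> j < length cs \<and> b \<in> cs ! j)"

lemma tail_covers_Sig_nf_insert:
  assumes "tail_covers_Sig cs" "a \<in> Sig"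
  shows "tail_covers_Sig (nf_insert cs a) \<and> nf_insert cs a ! 0 = cs ! 0"
proof -
  obtain j where j: "1 \<le> j" "j < length cs" "a \<in> cs ! j" using assms unfolding tail_covers_Sig_def by auto
  then have "level cs a \<noteq> 0" using less_level dep_refl assms(2) by fastforce
  then have "nf_insert cs a ! 0 = cs ! 0" using j unfolding nf_insert_def by (auto simp: nth_append)
  moreover have "tail_covers_Sig (nf_insert cs a)"
    using assms(1) nth_nf_insert_mono length_nf_insert unfolding tail_covers_Sig_def
    by (meson less_le_trans subsetD)
  ultimately show ?thesis by auto
qed

lemma head_foldl_nf_insert:
  "tail_covers_Sig cs \<Longrightarrow> set u \<subseteq> Sig \<Longrightarrow> foldl nf_insert cs u ! 0 = cs ! 0"
proof (induction u arbitrary: cs)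
  case (Cons a u)
  then show ?case using tail_covers_Sig_nf_insert[OF Cons.prems(1)] by simp
qed simp

lemma foldl_nf_insert_dep_later:
  assumes "a \<in> set u" "j < length cs" "b \<in> cs ! j" "(b, a) \<in> D"
  shows "\<exists>k>j. k < length (foldl nf_insert cs u) \<and> a \<in> foldl nf_insert cs u ! k"
proof -
  obtain u1 u2 where u: "u = u1 @ a # u2" using assms(1) split_list by metis
  let ?cs = "foldl nf_insert cs u1"
  have "j < level ?cs a" using nth_foldl_nf_insert_mono assms less_level by blast
  moreover have "level ?cs a < length (foldl nf_insert (nf_insert ?cs a) u2)
      \<and> a \<in> foldl nf_insert (nf_insert ?cs a) u2 ! level ?cs a"
    using in_nf_insert_level nth_foldl_nf_insert_mono by blast
  ultimately show ?thesis using u by auto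
qed

text \<open>Each round containing all letters pushes the letters at distance \<open>m\<close> from the last
  clique in the dependence graph past it, once \<open>m\<close> rounds have been appended.\<close>

lemma foldl_nf_insert_rounds:
  assumes us: "\<forall>u\<in>set us. Sig \<subseteq> set u"
    and cs: "cs \<noteq> []" and b0: "b0 \<in> last cs" "b0 \<in> Sig"
    and m: "(b0, b) \<in> D ^^ m" "m < length us"
  shows "\<exists>k \<ge> length cs. k < length (foldl nf_insert cs (concat us)) \<and> b \<in> foldl nf_insert cs (concat us) ! k"
proof -
  let ?F = "\<lambda>j. foldl nf_insert cs (concat (take j us))"
  have "\<exists>k \<ge> length cs. k < length (?F (Suc m)) \<and> b \<in> ?F (Suc m) ! k"
    using m
  proof (induction m arbitrary: b)
    case 0
    then have "b = b0" "b0 \<in> set (us ! 0)" using us b0 by (auto dest: nth_mem)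
    moreover have "take (Suc 0) us = [us ! 0]" using 0 by (cases us) auto
    ultimately obtain k where "k > length cs - 1" "k < length (?F 1)" "b0 \<in> ?F 1 ! k"
      using foldl_nf_insert_dep_later[of b0 "us ! 0" "length cs - 1" cs b0] cs b0 dep_refl
      by (auto simp: last_conv_nth)
    then show ?case using \<open>b = b0\<close> by (intro exI[of _ k]) auto
  next
    case (Suc m)
    obtain c where c: "(b0, c) \<in> D ^^ m" "(c, b) \<in> D" using Suc.prems(1) by auto
    obtain k where k: "k \<ge> length cs" "k < length (?F (Suc m))" "c \<in> ?F (Suc m) ! k"
      using Suc.IH[OF c(1)] Suc.prems(2) by auto
    have "?F (Suc (Suc m)) = foldl nf_insert (?F (Suc m)) (us ! Suc m)"
      using Suc.prems(2) by (simp add: take_Suc_conv_app_nth)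
    moreover have "b \<in> set (us ! Suc m)" using us c(2) Suc.prems(2) dep_iff by (meson nth_mem subsetD)
    ultimately show ?case using foldl_nf_insert_dep_later[OF _ k(2) k(3) c(2)] k(1)
      by (metis order.strict_implies_order order_trans)
  qed
  moreover have "foldl nf_insert cs (concat us)
      = foldl nf_insert (?F (Suc m)) (concat (drop (Suc m) us))"
    by (metis append_take_drop_id concat_append foldl_append)
  ultimately show ?thesis using nth_foldl_nf_insert_mono by fastforce
qed

end

section \<open>Concurrent systems\<close>

lemma run_None [simp]: "run delta None w = None"
  by (induction w) auto

lemma run_append: "run delta s (u @ v) = run delta (run delta s u) v"
  by (induction u arbitrary: s) (auto split: option.splits)

lemma run_append_neq_None: "run delta s (u @ v) \<noteq> None \<Longrightarrow> run delta s u \<noteq> None"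
  by (metis run_None run_append)

locale concurrent_sys =
  fixes Sig :: "'a set" and I :: "('a \<times> 'a) set"
    and X :: "'x set" and delta :: "'x \<Rightarrow> 'a \<Rightarrow> 'x option"
  assumes concurrent_system: "concurrent_system Sig I X delta"

sublocale concurrent_sys \<subseteq> trace_alphabet Sig I
  using concurrent_system unfolding concurrent_system_def by unfold_locales auto

context concurrent_sys
begin

lemma finite_X: "finite X"
  using concurrent_system concurrent_system_def by auto

lemma run_in_X: "\<alpha> \<in> X \<Longrightarrow> set w \<subseteq> Sig \<Longrightarrow> run delta (Some \<alpha>) w = Some \<beta> \<Longrightarrow> \<beta> \<in> X"
proof (induction w arbitrary: \<alpha>)
  case (Cons a w)
  then obtain \<gamma> where "delta \<alpha> a = Some \<gamma>" by (cases "delta \<alpha> a") auto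
  moreover from this have "\<gamma> \<in> X"
    using Cons.prems concurrent_system unfolding concurrent_system_def by fastforce
  ultimately show ?case using Cons by auto
qed simp

lemma run_neq_None_in_X:
  "\<alpha> \<in> X \<Longrightarrow> set w \<subseteq> Sig \<Longrightarrow> run delta (Some \<alpha>) w \<noteq> None \<Longrightarrow> \<exists>\<beta>\<in>X. run delta (Some \<alpha>) w = Some \<beta>"
  using run_in_X by (cases "run delta (Some \<alpha>) w") auto

lemma run_trace_eq:
  assumes "trace_eq I u v" "\<alpha> \<in> X" "set u \<subseteq> Sig"
  shows "run delta (Some \<alpha>) u = run delta (Some \<alpha>) v"
proof -
  have "set u = set v \<and> run delta (Some \<alpha>) u = run delta (Some \<alpha>) v"
    using assms(1) unfolding trace_eq_def
  proof (induction rule: rtranclp_induct)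
    case (step w w')
    from step.hyps(2) obtain p q a b where w: "w = p @ [a, b] @ q" "w' = p @ [b, a] @ q" "(a, b) \<in> I"
      by cases auto
    have "run delta (Some \<alpha>) (p @ [a, b]) = run delta (Some \<alpha>) (p @ [b, a])"
    proof (cases "run delta (Some \<alpha>) p")
      case (Some \<gamma>)
      then have "\<gamma> \<in> X" using run_in_X assms(2,3) step.IH w by auto
      then show ?thesis using Some w(3) concurrent_system unfolding concurrent_system_def
        by (fastforce simp: run_append)
    qed (simp add: run_append)
    then have "run delta (Some \<alpha>) ((p @ [a, b]) @ q) = run delta (Some \<alpha>) ((p @ [b, a]) @ q)"
      by (simp only: run_append)
    then show ?case using step.IH w by (simp add: insert_commute)
  qed simp
  then show ?thesis by simp
qed

section \<open>Normal forms as walks in the augmented digraph of states and cliques\<close>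

definition enabled_at :: "'x \<Rightarrow> 'a set list \<Rightarrow> bool" where
  "enabled_at \<alpha> cs \<longleftrightarrow> \<alpha> \<in> X \<and> normal_seq cs \<and> run delta (Some \<alpha>) (word_of cs) \<noteq> None"

lemma enabled_at_Cons:
  assumes "enabled_at \<alpha> (c # cs)"
  obtains \<beta> where "act_clique delta \<alpha> c = Some \<beta>" "enabled_at \<beta> cs" "c \<in> cliques Sig I"
proof -
  have c: "c \<in> cliques Sig I" "normal_seq cs" using assms normal_seq_Cons enabled_at_def by auto
  have r: "run delta (Some \<alpha>) (clique_word c @ word_of cs) \<noteq> None" using assms enabled_at_def by auto
  then obtain \<beta> where \<beta>: "act_clique delta \<alpha> c = Some \<beta>"
    using run_append_neq_None unfolding act_clique_def by fastforce
  have "set (clique_word c) \<subseteq> Sig" using c clique_subset by simp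
  then have "\<beta> \<in> X" using run_in_X \<beta> assms unfolding act_clique_def enabled_at_def by blast
  moreover have "run delta (Some \<beta>) (word_of cs) \<noteq> None"
    using r \<beta> unfolding act_clique_def by (simp add: run_append)
  ultimately show ?thesis using that \<beta> c unfolding enabled_at_def by auto
qed

lemma enabled_at_ConsI:
  assumes "\<alpha> \<in> X" "c \<in> cliques Sig I" "act_clique delta \<alpha> c = Some \<beta>" "enabled_at \<beta> cs"
    and "cs \<noteq> [] \<Longrightarrow> clique_arrow Sig I c (hd cs)"
  shows "enabled_at \<alpha> (c # cs)"
  using assms unfolding enabled_at_def act_clique_def by (auto simp: normal_seq_Cons run_append)

fun adsc_path :: "'x \<Rightarrow> 'a set list \<Rightarrow> ('x \<times> 'a set \<times> nat) list" where
  "adsc_path \<alpha> [] = []"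
| "adsc_path \<alpha> (c # cs) = map (\<lambda>i. (\<alpha>, c, i)) [1..<Suc (card c)] @ adsc_path (the (act_clique delta \<alpha> c)) cs"

lemma length_adsc_path: "set cs \<subseteq> cliques Sig I \<Longrightarrow> length (adsc_path \<alpha> cs) = length (word_of cs)"
  by (induction cs arbitrary: \<alpha>) (auto simp: length_clique_word)

lemma nth_adsc_path_Cons: "k < card c \<Longrightarrow> adsc_path \<alpha> (c # cs) ! k = (\<alpha>, c, Suc k)"
  by (auto simp: nth_append)

lemma hd_adsc_path:
  "c \<in> cliques Sig I \<Longrightarrow> adsc_path \<alpha> (c # cs) \<noteq> [] \<and> hd (adsc_path \<alpha> (c # cs)) = (\<alpha>, c, 1)"
  using card_clique_pos by (auto simp: upt_rec)

lemma adsc_path_nodes: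
  assumes "enabled_at \<alpha> cs" "(\<gamma>, c, i) \<in> set (adsc_path \<alpha> cs)"
  shows "\<exists>k < length cs. c = cs ! k \<and> run delta (Some \<alpha>) (word_of (take k cs)) = Some \<gamma> \<and>
    (\<gamma>, c, i) \<in> ADSC_nodes Sig I X delta"
  using assms
proof (induction cs arbitrary: \<alpha>)
  case (Cons c' cs)
  obtain \<beta> where \<beta>: "act_clique delta \<alpha> c' = Some \<beta>" "enabled_at \<beta> cs" "c' \<in> cliques Sig I"
    using enabled_at_Cons[OF Cons.prems(1)] .
  show ?case
  proof (cases "(\<gamma>, c, i) \<in> set (adsc_path \<beta> cs)")
    case True
    then obtain k where "k < length cs" "c = cs ! k" "run delta (Some \<beta>) (word_of (take k cs)) = Some \<gamma>"
      "(\<gamma>, c, i) \<in> ADSC_nodes Sig I X delta"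
      using Cons.IH[OF \<beta>(2)] by blast
    then show ?thesis using \<beta>(1) unfolding act_clique_def
      by (intro exI[of _ "Suc k"]) (auto simp: run_append)
  next
    case False
    then have "\<gamma> = \<alpha>" "c = c'" "1 \<le> i" "i \<le> card c" using Cons.prems \<beta> by auto
    moreover have "\<alpha> \<in> X" using Cons.prems enabled_at_def by auto
    ultimately show ?thesis using \<beta>(1,3) unfolding ADSC_nodes_def DSC_nodes_def
      by (intro exI[of _ 0]) auto
  qed
qed simp

lemma adsc_path_subset_nodes: "enabled_at \<alpha> cs \<Longrightarrow> set (adsc_path \<alpha> cs) \<subseteq> ADSC_nodes Sig I X delta"
  by (force dest: adsc_path_nodes)

lemma adsc_path_block_walk:
  assumes "(\<alpha>, c) \<in> DSC_nodes Sig I X delta"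
  shows "successively (ADSC_arc Sig I X delta) (map (\<lambda>i. (\<alpha>, c, i)) [1..<Suc (card c)])"
  using assms unfolding successively_map successively_conv_nth ADSC_arc_def ADSC_nodes_def
  by (auto simp del: upt_Suc)

lemma adsc_path_walk: "enabled_at \<alpha> cs \<Longrightarrow> successively (ADSC_arc Sig I X delta) (adsc_path \<alpha> cs)"
proof (induction cs arbitrary: \<alpha>)
  case (Cons c cs)
  obtain \<beta> where \<beta>: "act_clique delta \<alpha> c = Some \<beta>" "enabled_at \<beta> cs" "c \<in> cliques Sig I"
    using enabled_at_Cons[OF Cons.prems] .
  let ?B = "map (\<lambda>i. (\<alpha>, c, i)) [1..<Suc (card c)]"
  have "(\<alpha>, c) \<in> DSC_nodes Sig I X delta"
    using Cons.prems \<beta> unfolding enabled_at_def DSC_nodes_def by auto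
  then have block: "successively (ADSC_arc Sig I X delta) ?B" by (rule adsc_path_block_walk)
  have hd: "hd (adsc_path \<beta> cs) = (\<beta>, hd cs, 1)" "adsc_path \<beta> cs \<noteq> []" if "cs \<noteq> []"
  proof -
    obtain c' cs' where "cs = c' # cs'" using \<open>cs \<noteq> []\<close> by (cases cs) auto
    moreover from this have "c' \<in> cliques Sig I" using \<beta>(2) enabled_at_def normal_seq_Cons by auto
    ultimately show "hd (adsc_path \<beta> cs) = (\<beta>, hd cs, 1)" "adsc_path \<beta> cs \<noteq> []"
      using hd_adsc_path by auto
  qed
  have "ADSC_arc Sig I X delta (\<alpha>, c, card c) (\<beta>, hd cs, 1)" if "cs \<noteq> []"
  proof -
    have "clique_arrow Sig I c (hd cs)"
      using that Cons.prems unfolding enabled_at_def normal_seq_Cons by auto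
    moreover have "(\<beta>, hd cs, 1) \<in> ADSC_nodes Sig I X delta"
      using hd[OF that] adsc_path_subset_nodes[OF \<beta>(2)] by (metis hd_in_set subsetD)
    moreover have "(\<alpha>, c, card c) \<in> ADSC_nodes Sig I X delta"
      using adsc_path_subset_nodes[OF Cons.prems] card_clique_pos[OF \<beta>(3)] by auto
    ultimately show ?thesis using \<beta>(1) unfolding ADSC_arc_def DSC_arc_def ADSC_nodes_def by auto
  qed
  moreover have "last ?B = (\<alpha>, c, card c)" using card_clique_pos[OF \<beta>(3)] by (simp add: last_map)
  ultimately show ?case using block Cons.IH[OF \<beta>(2)] \<beta>(1) hd
    by (cases "cs = []") (auto simp: successively_append_iff)
qed simp

definition node_letter :: "'x \<times> 'a set \<times> nat \<Rightarrow> 'a" where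
  "node_letter = (\<lambda>(\<gamma>, c, i). clique_word c ! (i - 1))"

lemma map_node_letter_adsc_path: "set cs \<subseteq> cliques Sig I \<Longrightarrow> map node_letter (adsc_path \<alpha> cs) = word_of cs"
proof (induction cs arbitrary: \<alpha>)
  case (Cons c cs)
  have "[1..<Suc (card c)] = map Suc [0..<card c]" by (simp add: map_Suc_upt)
  then have "map node_letter (map (\<lambda>i. (\<alpha>, c, i)) [1..<Suc (card c)]) = map ((!) (clique_word c)) [0..<card c]"
    unfolding node_letter_def by simp
  also have "\<dots> = clique_word c" using Cons.prems length_clique_word[of c] by (metis map_nth list.set_intros(1) subsetD)
  finally show ?case using Cons by simp
qed simp

text \<open>\<open>p\<close> is the segment of \<open>adsc_path \<alpha> cs\<close> starting at position \<open>d\<close> within the first clique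
  and reaching into the last clique.\<close>

definition adsc_window :: "'x \<Rightarrow> 'a set list \<Rightarrow> nat \<Rightarrow> ('x \<times> 'a set \<times> nat) list \<Rightarrow> bool" where
  "adsc_window \<alpha> cs d p \<longleftrightarrow> enabled_at \<alpha> cs \<and> cs \<noteq> [] \<and> d < card (hd cs) \<and>
     p = take (length p) (drop d (adsc_path \<alpha> cs)) \<and>
     d + length p \<le> length (adsc_path \<alpha> cs) \<and> length (adsc_path \<alpha> cs) \<le> d + length p + card Sig"

lemma adsc_window_singleton:
  assumes "(\<alpha>, c, i) \<in> ADSC_nodes Sig I X delta"
  shows "adsc_window \<alpha> [c] (i - 1) [(\<alpha>, c, i)]"
proof -
  have v: "\<alpha> \<in> X" "c \<in> cliques Sig I" "act_clique delta \<alpha> c \<noteq> None" "1 \<le> i" "i \<le> card c"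
    using assms unfolding ADSC_nodes_def DSC_nodes_def by auto
  have len: "length (adsc_path \<alpha> [c]) = card c"
    using v length_adsc_path[of "[c]" \<alpha>] length_clique_word by simp
  then have "drop (i - 1) (adsc_path \<alpha> [c]) = adsc_path \<alpha> [c] ! (i - 1) # drop i (adsc_path \<alpha> [c])"
    using Cons_nth_drop_Suc[of "i - 1" "adsc_path \<alpha> [c]"] v(4,5) by simp
  then have "drop (i - 1) (adsc_path \<alpha> [c]) = (\<alpha>, c, i) # drop i (adsc_path \<alpha> [c])"
    using nth_adsc_path_Cons[of "i - 1" c \<alpha> "[]"] v(4,5) by simp
  then show ?thesis using v len card_clique_le[of c]
    unfolding adsc_window_def enabled_at_def act_clique_def normal_seq_def by (simp del: adsc_path.simps)
qed

lemma adsc_window_hd: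
  assumes "adsc_window \<alpha> cs d p" "p \<noteq> []"
  shows "hd p = (\<alpha>, hd cs, Suc d)"
proof -
  have d: "d < length (adsc_path \<alpha> cs)" using assms unfolding adsc_window_def by (cases p) auto
  have "hd p = hd (take (length p) (drop d (adsc_path \<alpha> cs)))"
    using assms(1) unfolding adsc_window_def by simp
  also have "\<dots> = adsc_path \<alpha> cs ! d" using assms(2) d by (simp add: hd_drop_conv_nth)
  finally have "hd p = adsc_path \<alpha> cs ! d" .
  then show ?thesis using assms nth_adsc_path_Cons[of d "hd cs"] unfolding adsc_window_def
    by (cases cs) auto
qed

lemma adsc_window_Cons_same_clique:
  assumes "adsc_window \<alpha> cs d p" "0 < d"
  shows "adsc_window \<alpha> cs (d - 1) ((\<alpha>, hd cs, d) # p)"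
proof -
  have "d - 1 < length (adsc_path \<alpha> cs)" "adsc_path \<alpha> cs ! (d - 1) = (\<alpha>, hd cs, d)"
    using assms nth_adsc_path_Cons[of "d - 1" "hd cs"] unfolding adsc_window_def
    by (cases cs; auto)+
  then have "drop (d - 1) (adsc_path \<alpha> cs) = (\<alpha>, hd cs, d) # drop d (adsc_path \<alpha> cs)"
    using Cons_nth_drop_Suc[of "d - 1" "adsc_path \<alpha> cs"] assms(2) by simp
  then show ?thesis using assms unfolding adsc_window_def by auto
qed

lemma adsc_window_Cons_new_clique:
  assumes p: "adsc_window \<beta> cs 0 p" and arc: "DSC_arc Sig I X delta (\<alpha>, c) (\<beta>, hd cs)"
  shows "adsc_window \<alpha> (c # cs) (card c - 1) ((\<alpha>, c, card c) # p)"
proof -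
  have c: "\<alpha> \<in> X" "c \<in> cliques Sig I" "act_clique delta \<alpha> c = Some \<beta>" "clique_arrow Sig I c (hd cs)"
    using arc unfolding DSC_arc_def DSC_nodes_def by auto
  then have "enabled_at \<alpha> (c # cs)" using p enabled_at_ConsI unfolding adsc_window_def by blast
  moreover have "0 < card c" using card_clique_pos[OF c(2)] .
  moreover have "drop (card c - 1) (adsc_path \<alpha> (c # cs)) = (\<alpha>, c, card c) # adsc_path \<beta> cs"
    using c(3) calculation(2) by (cases "card c") (auto simp del: upt_Suc simp: upt_Suc_append)
  ultimately show ?thesis using p c(2) card_clique_le[OF c(2)] unfolding adsc_window_def by auto
qed

lemma walk_adsc_window:
  "p \<noteq> [] \<Longrightarrow> set p \<subseteq> ADSC_nodes Sig I X delta \<Longrightarrow> successively (ADSC_arc Sig I X delta) p \<Longrightarrow>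
   \<exists>\<alpha> cs d. adsc_window \<alpha> cs d p"
proof (induction p)
  case (Cons v p)
  obtain \<alpha> c i where v: "v = (\<alpha>, c, i)" by (cases v) auto
  show ?case
  proof (cases "p = []")
    case True
    have "adsc_window \<alpha> [c] (i - 1) [(\<alpha>, c, i)]"
      using Cons.prems v by (intro adsc_window_singleton) auto
    then show ?thesis using True v by blast
  next
    case False
    then obtain \<alpha>' cs d where win: "adsc_window \<alpha>' cs d p"
      using Cons by (auto simp: successively_Cons)
    have "ADSC_arc Sig I X delta v (\<alpha>', hd cs, Suc d)"
      using Cons.prems False adsc_window_hd[OF win False] by (auto simp: successively_Cons)
    then have "(\<alpha>' = \<alpha> \<and> hd cs = c \<and> d = i) \<or> (i = card c \<and> d = 0 \<and> DSC_arc Sig I X delta (\<alpha>, c) (\<alpha>', hd cs))"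
      unfolding ADSC_arc_def v by auto
    moreover have "0 < i" using Cons.prems v unfolding ADSC_nodes_def by auto
    ultimately show ?thesis
      using adsc_window_Cons_same_clique[OF win] adsc_window_Cons_new_clique win v by fastforce
  qed
qed simp

end

section \<open>Counting traces and walks\<close>

context concurrent_sys
begin

definition trace_class :: "'a list \<Rightarrow> 'a list set" where
  "trace_class w = {v. trace_eq I w v}"

lemma trace_class_eq_iff: "trace_class u = trace_class v \<longleftrightarrow> trace_eq I u v"
proof
  assume "trace_class u = trace_class v"
  then show "trace_eq I u v" unfolding trace_class_def by (metis mem_Collect_eq trace_eq_refl)
next
  assume "trace_eq I u v"
  then show "trace_class u = trace_class v"
    unfolding trace_class_def by (auto intro: trace_eq_trans trace_eq_sym)
qed

definition trace_classes :: "'x \<Rightarrow> 'x \<Rightarrow> nat \<Rightarrow> 'a list set set" where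
  "trace_classes \<alpha> \<beta> n = trace_class ` {w \<in> words Sig. length w = n \<and> run delta (Some \<alpha>) w = Some \<beta>}"

definition trace_runs :: "nat \<Rightarrow> ('x \<times> 'x \<times> 'a list set) set" where
  "trace_runs n = (SIGMA \<alpha>:X. SIGMA \<beta>:X. trace_classes \<alpha> \<beta> n)"

lemma finite_trace_classes: "finite (trace_classes \<alpha> \<beta> n)"
  unfolding trace_classes_def words_def
  by (rule finite_imageI, rule finite_subset[OF _ finite_lists_length_eq[OF finite_Sig, of n]]) auto

lemma finite_trace_runs: "finite (trace_runs n)"
  unfolding trace_runs_def using finite_X finite_trace_classes by auto

lemma count_traces_eq_card: "count_traces Sig I delta \<alpha> \<beta> n = card (trace_classes \<alpha> \<beta> n)"
  unfolding count_traces_def trace_classes_def trace_class_def ..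

lemma card_trace_runs: "card (trace_runs n) = (\<Sum>\<alpha>\<in>X. \<Sum>\<beta>\<in>X. count_traces Sig I delta \<alpha> \<beta> n)"
  unfolding trace_runs_def count_traces_eq_card
  using finite_X finite_trace_classes by (simp add: card_SigmaI)

lemma count_traces_le_card_trace_runs:
  assumes "\<alpha> \<in> X" "\<beta> \<in> X"
  shows "count_traces Sig I delta \<alpha> \<beta> n \<le> card (trace_runs n)"
proof -
  have "count_traces Sig I delta \<alpha> \<beta> n \<le> (\<Sum>\<beta>\<in>X. count_traces Sig I delta \<alpha> \<beta> n)"
    using assms finite_X by (intro member_le_sum) auto
  also have "\<dots> \<le> card (trace_runs n)"
    unfolding card_trace_runs using assms finite_X by (intro member_le_sum) auto
  finally show ?thesis .
qed

lemma in_trace_runsI: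
  "\<alpha> \<in> X \<Longrightarrow> set w \<subseteq> Sig \<Longrightarrow> run delta (Some \<alpha>) w = Some \<beta> \<Longrightarrow>
   (\<alpha>, \<beta>, trace_class w) \<in> trace_runs (length w)"
  using run_in_X unfolding trace_runs_def trace_classes_def words_def by auto

definition runs :: "nat \<Rightarrow> ('x \<times> 'x \<times> 'a list) set" where
  "runs n = {(\<alpha>, \<beta>, t). \<alpha> \<in> X \<and> set t \<subseteq> Sig \<and> length t = n \<and> run delta (Some \<alpha>) t = Some \<beta>}"

lemma finite_runs: "finite (runs n)"
proof -
  have "runs n \<subseteq> X \<times> X \<times> {t. set t \<subseteq> Sig \<and> length t = n}"
    unfolding runs_def using run_in_X by auto
  then show ?thesis by (rule finite_subset) (use finite_lists_length_eq[OF finite_Sig] finite_X in auto)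
qed

lemma trace_runs_subset_image: "trace_runs n \<subseteq> (\<lambda>(\<alpha>, \<beta>, t). (\<alpha>, \<beta>, trace_class t)) ` runs n"
proof
  fix z assume "z \<in> trace_runs n"
  then obtain \<alpha> \<beta> w where "z = (\<alpha>, \<beta>, trace_class w)" "(\<alpha>, \<beta>, w) \<in> runs n"
    unfolding trace_runs_def trace_classes_def words_def runs_def by auto
  then show "z \<in> (\<lambda>(\<alpha>, \<beta>, t). (\<alpha>, \<beta>, trace_class t)) ` runs n" by force
qed

definition window_data :: "nat \<Rightarrow> ('x \<times> 'a set list \<times> nat) set" where
  "window_data n = {(\<alpha>, cs, d). enabled_at \<alpha> cs \<and> d < card Sig \<and>
     n \<le> length (word_of cs) \<and> length (word_of cs) \<le> n + 2 * card Sig}"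

lemma walks_ADSC_subset_windows:
  assumes "0 < n"
  shows "walks (ADSC_nodes Sig I X delta) (ADSC_arc Sig I X delta) n
    \<subseteq> (\<lambda>(\<alpha>, cs, d). take n (drop d (adsc_path \<alpha> cs))) ` window_data n"
proof
  fix p assume "p \<in> walks (ADSC_nodes Sig I X delta) (ADSC_arc Sig I X delta) n"
  then have p: "length p = n" "p \<noteq> []" "set p \<subseteq> ADSC_nodes Sig I X delta"
    "successively (ADSC_arc Sig I X delta) p"
    using assms unfolding walks_def by auto
  then obtain \<alpha> cs d where win: "adsc_window \<alpha> cs d p" using walk_adsc_window by blast
  then have cl: "set cs \<subseteq> cliques Sig I" and "cs \<noteq> []"
    unfolding adsc_window_def enabled_at_def normal_seq_def by auto
  then have "card (hd cs) \<le> card Sig" using card_clique_le hd_in_set by blast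
  then have "(\<alpha>, cs, d) \<in> window_data n"
    using win p(1) length_adsc_path[OF cl] unfolding adsc_window_def window_data_def by auto
  moreover have "p = take n (drop d (adsc_path \<alpha> cs))" using win p(1) unfolding adsc_window_def by simp
  ultimately show "p \<in> (\<lambda>(\<alpha>, cs, d). take n (drop d (adsc_path \<alpha> cs))) ` window_data n" by force
qed

lemma finite_window_data: "finite (window_data n)"
proof -
  have "window_data n \<subseteq> X \<times> {cs. set cs \<subseteq> Pow Sig \<and> length cs \<le> n + 2 * card Sig} \<times> {..<card Sig}"
    unfolding window_data_def enabled_at_def normal_seq_def
    using clique_subset length_le_length_word_of by fastforce
  then show ?thesis
    using finite_lists_length_le[of "Pow Sig"] finite_Sig finite_X by (auto intro: finite_subset)
qed

text \<open>By uniqueness of normal forms, a window is determined by its offset, its initial state and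
  the trace it reads.\<close>

lemma card_window_data_le:
  "card (window_data n) \<le> card Sig * (\<Sum>m\<in>{n..n + 2 * card Sig}. card (trace_runs m))"
proof -
  define G where "G = (\<lambda>(\<alpha>, cs, d::nat). (d, \<alpha>, the (run delta (Some \<alpha>) (word_of cs)), trace_class (word_of cs)))"
  have "card (window_data n) = card (G ` window_data n)"
  proof (rule card_image[symmetric], rule inj_onI)
    fix x y assume xy: "x \<in> window_data n" "y \<in> window_data n" "G x = G y"
    obtain \<alpha> cs d \<alpha>' cs' d' where x: "x = (\<alpha>, cs, d)" and y: "y = (\<alpha>', cs', d')"
      by (cases x, cases y) auto
    have "normal_seq cs" "normal_seq cs'" using xy x y unfolding window_data_def enabled_at_def by auto
    moreover have "trace_eq I (word_of cs) (word_of cs')" "\<alpha> = \<alpha>'" "d = d'"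
      using xy(3) unfolding x y G_def by (auto simp: trace_class_eq_iff)
    ultimately show "x = y" unfolding x y using normal_seq_unique by blast
  qed
  also have "\<dots> \<le> card ({..<card Sig} \<times> (\<Union>m\<in>{n..n + 2 * card Sig}. trace_runs m))"
  proof (rule card_mono)
    show "finite ({..<card Sig} \<times> (\<Union>m\<in>{n..n + 2 * card Sig}. trace_runs m))"
      using finite_trace_runs by auto
    show "G ` window_data n \<subseteq> {..<card Sig} \<times> (\<Union>m\<in>{n..n + 2 * card Sig}. trace_runs m)"
    proof
      fix z assume "z \<in> G ` window_data n"
      then obtain \<alpha> cs d where x: "(\<alpha>, cs, d) \<in> window_data n" and z: "z = G (\<alpha>, cs, d)" by auto
      then have "\<alpha> \<in> X" "set (word_of cs) \<subseteq> Sig" "run delta (Some \<alpha>) (word_of cs) \<noteq> None"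
        unfolding window_data_def enabled_at_def normal_seq_def using set_word_of_subset by auto
      then show "z \<in> {..<card Sig} \<times> (\<Union>m\<in>{n..n + 2 * card Sig}. trace_runs m)"
        using x in_trace_runsI[of \<alpha> "word_of cs"] unfolding z G_def window_data_def by auto
    qed
  qed
  also have "\<dots> \<le> card Sig * (\<Sum>m\<in>{n..n + 2 * card Sig}. card (trace_runs m))"
    using card_UN_le[of "{n..n + 2 * card Sig}" trace_runs] by (simp add: card_cartesian_product)
  finally show ?thesis .
qed

lemma card_walks_ADSC_le:
  assumes "0 < n"
  shows "card (walks (ADSC_nodes Sig I X delta) (ADSC_arc Sig I X delta) n)
          \<le> card Sig * (\<Sum>m\<in>{n..n + 2 * card Sig}. card (trace_runs m))"
proof -
  have "card (walks (ADSC_nodes Sig I X delta) (ADSC_arc Sig I X delta) n)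
      \<le> card ((\<lambda>(\<alpha>, cs, d). take n (drop d (adsc_path \<alpha> cs))) ` window_data n)"
    using walks_ADSC_subset_windows[OF assms] finite_window_data by (intro card_mono finite_imageI)
  also have "\<dots> \<le> card (window_data n)" using finite_window_data by (rule card_image_le)
  finally show ?thesis using card_window_data_le by (rule le_trans)
qed

end

lemma card_image_le_if_factors:
  assumes "finite S" "\<And>x y. x \<in> S \<Longrightarrow> y \<in> S \<Longrightarrow> F x = F y \<Longrightarrow> G x = G y"
  shows "card (G ` S) \<le> card (F ` S)"
proof -
  define H where "H = (\<lambda>f. G (inv_into S F f))"
  have "G x = H (F x)" if "x \<in> S" for x
  proof -
    have "inv_into S F (F x) \<in> S" "F (inv_into S F (F x)) = F x"
      using that by (auto intro: inv_into_into f_inv_into_f)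
    then show ?thesis unfolding H_def using assms(2) that by metis
  qed
  then have "G ` S = H ` F ` S" by (auto simp: image_iff)
  then show ?thesis using card_image_le[OF finite_imageI[OF assms(1)]] by simp
qed

lemma Min_conv_radius_eq_inverse:
  fixes c :: "'i \<Rightarrow> nat \<Rightarrow> real"
  assumes A: "finite A" "A \<noteq> {}" and \<rho>: "0 < \<rho>" and nonneg: "\<And>i n. 0 \<le> c i n"
    and upper: "\<And>s. \<rho> < s \<Longrightarrow> exp_bounded (\<lambda>n. \<Sum>i\<in>A. c i n) s"
    and lower: "\<And>s. 0 < s \<Longrightarrow> exp_bounded (\<lambda>n. \<Sum>i\<in>A. c i n) s \<Longrightarrow> \<rho> \<le> s"
  shows "Min ((\<lambda>i. conv_radius (c i)) ` A) = ereal (1 / \<rho>)"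
proof (rule antisym)
  have "ereal (1 / \<rho>) \<le> conv_radius (c i)" if "i \<in> A" for i
  proof (rule conv_radius_ge_of_exp_bounded[OF \<rho> nonneg])
    fix s assume "\<rho> < s"
    have "c i n \<le> (\<Sum>i\<in>A. c i n)" for n using A(1) that nonneg by (intro member_le_sum) auto
    then show "exp_bounded (c i) s" by (intro exp_bounded_mono[OF upper[OF \<open>\<rho> < s\<close>]])
  qed
  then show "ereal (1 / \<rho>) \<le> Min ((\<lambda>i. conv_radius (c i)) ` A)" using A by simp
  show "Min ((\<lambda>i. conv_radius (c i)) ` A) \<le> ereal (1 / \<rho>)"
  proof (rule ccontr)
    assume "\<not> ?thesis"
    then have "ereal (1 / \<rho>) < Min ((\<lambda>i. conv_radius (c i)) ` A)" by (simp add: not_le)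
    from ereal_dense2[OF this] obtain r
      where r: "ereal (1 / \<rho>) < ereal r" "ereal r < Min ((\<lambda>i. conv_radius (c i)) ` A)" by blast
    have r_pos: "1 / \<rho> < r" "0 < r" using r(1) \<rho> by simp_all (meson \<rho> less_trans zero_less_divide_1_iff)
    have "summable (\<lambda>n. c i n * r ^ n)" if "i \<in> A" for i
    proof (rule summable_in_conv_radius)
      have "Min ((\<lambda>i. conv_radius (c i)) ` A) \<le> conv_radius (c i)" using A that by (intro Min_le) auto
      then show "ereal (norm r) < conv_radius (c i)" using r(2) r_pos(2) by simp
    qed
    then have "summable (\<lambda>n. (\<Sum>i\<in>A. c i n) * r ^ n)"
      by (simp add: sum_distrib_right summable_sum)
    then have "\<rho> \<le> 1 / r" using r_pos by (intro lower exp_bounded_of_summable) auto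
    then show False using r_pos \<rho> by (simp add: field_simps)
  qed
qed

section \<open>Irreducible concurrent systems\<close>

lemma (in trace_alphabet) dep_relpow_bound:
  assumes "\<forall>a\<in>Sig. \<forall>b\<in>Sig. (a, b) \<in> D\<^sup>*"
  obtains R where "\<forall>a\<in>Sig. \<forall>b\<in>Sig. \<exists>m<R. (a, b) \<in> D ^^ m"
proof -
  have "\<forall>p\<in>Sig \<times> Sig. \<exists>m. p \<in> D ^^ m" using assms rtrancl_power by blast
  then obtain f where f: "\<forall>p\<in>Sig \<times> Sig. p \<in> D ^^ f p" by metis
  have "f (a, b) < Suc (Max (f ` (Sig \<times> Sig)))" if "a \<in> Sig" "b \<in> Sig" for a b
    using that finite_Sig by (simp add: le_imp_less_Suc)
  then show ?thesis using f that by blast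
qed

lemma (in concurrent_sys) finite_ADSC_nodes: "finite (ADSC_nodes Sig I X delta)"
proof -
  have "ADSC_nodes Sig I X delta \<subseteq> X \<times> Pow Sig \<times> {..card Sig}"
    unfolding ADSC_nodes_def DSC_nodes_def using clique_subset card_clique_le by fastforce
  then show ?thesis using finite_X finite_Sig by (auto intro: finite_subset)
qed

lemma ADSC_pos_nodes_subset: "ADSC_pos_nodes Sig I X delta \<subseteq> ADSC_nodes Sig I X delta"
  unfolding ADSC_pos_nodes_def by auto

locale irreducible_concurrent_sys = concurrent_sys Sig I X delta
  for Sig :: "'a set" and I and X :: "'x set" and delta +
  assumes non_trivial: "non_trivial Sig X delta"
    and irreducible: "irreducible_system Sig I X delta"
begin

abbreviation pos_nodes where "pos_nodes \<equiv> ADSC_pos_nodes Sig I X delta"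
abbreviation pos_arc where "pos_arc \<equiv> \<lambda>u v. ADSC_arc Sig I X delta u v \<and> u \<in> pos_nodes \<and> v \<in> pos_nodes"

lemma X_nonempty: "X \<noteq> {}"
  using non_trivial unfolding non_trivial_def by auto

lemma card_trace_runs_pos: "0 < card (trace_runs n)"
proof -
  obtain \<alpha> a \<beta> where a: "\<alpha> \<in> X" "a \<in> Sig" "delta \<alpha> a = Some \<beta>"
    using non_trivial unfolding non_trivial_def by auto
  then have "\<beta> \<in> X" using run_in_X[of \<alpha> "[a]"] by auto
  then obtain u where u: "set u \<subseteq> Sig" "run delta (Some \<beta>) u = Some \<alpha>"
    using irreducible a(1) unfolding irreducible_system_def accessible_def words_def by blast
  define w where "w = concat (replicate n (a # u))"
  have "run delta (Some \<alpha>) (concat (replicate k (a # u))) = Some \<alpha>" for k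
    by (induction k) (auto simp: run_append a(3) u(2))
  then have "run delta (Some \<alpha>) (take n w) \<noteq> None"
    using run_append_neq_None[of delta _ "take n w" "drop n w"] unfolding w_def by simp
  moreover have "set w \<subseteq> Sig" using a(2) u(1) unfolding w_def by auto
  then have "set (take n w) \<subseteq> Sig" using set_take_subset[of n w] by blast
  moreover have "length w = n * Suc (length u)" unfolding w_def by (simp add: length_concat sum_list_replicate)
  then have "length (take n w) = n" by simp
  ultimately obtain \<beta>' where "(\<alpha>, \<beta>', trace_class (take n w)) \<in> trace_runs n"
    using in_trace_runsI[of \<alpha> "take n w"] a(1) by fastforce
  then show ?thesis using finite_trace_runs card_gt_0_iff by blast
qed

lemma exists_run_containing:
  assumes "finite A" "A \<subseteq> Sig" "\<gamma> \<in> X"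
  shows "\<exists>u. set u \<subseteq> Sig \<and> A \<subseteq> set u \<and> run delta (Some \<gamma>) u \<noteq> None"
  using assms
proof (induction A arbitrary: \<gamma> rule: finite_induct)
  case (insert a A)
  obtain w where w: "set w \<subseteq> Sig" "a \<in> set w" "run delta (Some \<gamma>) w \<noteq> None"
    using irreducible insert.prems unfolding irreducible_system_def alive_def words_def by blast
  then obtain \<gamma>' where "\<gamma>' \<in> X" "run delta (Some \<gamma>) w = Some \<gamma>'"
    using run_neq_None_in_X insert.prems by blast
  moreover obtain u where "set u \<subseteq> Sig" "A \<subseteq> set u" "run delta (Some \<gamma>') u \<noteq> None"
    using insert.IH[of \<gamma>'] insert.prems calculation by auto
  ultimately show ?case using w by (intro exI[of _ "w @ u"]) (auto simp: run_append)
qed (auto intro: exI[of _ "[]"])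

lemma exists_rounds:
  "\<gamma> \<in> X \<Longrightarrow> \<exists>us. length us = R \<and> (\<forall>u\<in>set us. set u \<subseteq> Sig \<and> Sig \<subseteq> set u) \<and>
     run delta (Some \<gamma>) (concat us) \<noteq> None"
proof (induction R arbitrary: \<gamma>)
  case (Suc R)
  obtain u where u: "set u \<subseteq> Sig" "Sig \<subseteq> set u" "run delta (Some \<gamma>) u \<noteq> None"
    using exists_run_containing[OF finite_Sig] Suc.prems by blast
  then obtain \<gamma>' where "\<gamma>' \<in> X" "run delta (Some \<gamma>) u = Some \<gamma>'"
    using run_neq_None_in_X Suc.prems by blast
  then show ?case using u Suc.IH by (fastforce intro: exI[of _ "u # _"] simp: run_append)
qed simp

definition saturates :: "'a set list \<Rightarrow> 'a list \<Rightarrow> bool" where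
  "saturates cs w \<longleftrightarrow>
     (\<forall>b\<in>Sig. \<exists>k\<ge>length cs. k < length (foldl nf_insert cs w) \<and> b \<in> foldl nf_insert cs w ! k)"

text \<open>After enough rounds containing every letter, every letter depends on the last clique of
  any normal form through a chain of dependent letters, one per round.\<close>

lemma exists_saturating_word:
  assumes "\<gamma> \<in> X"
  shows "\<exists>w. set w \<subseteq> Sig \<and> run delta (Some \<gamma>) w \<noteq> None \<and>
    (\<forall>cs. normal_seq cs \<longrightarrow> cs \<noteq> [] \<longrightarrow> saturates cs w)"
proof -
  obtain R where R: "\<forall>a\<in>Sig. \<forall>b\<in>Sig. \<exists>m<R. (a, b) \<in> D ^^ m"
    using dep_relpow_bound irreducible unfolding irreducible_system_def irreducible_monoid_def by blast
  obtain us where us: "length us = R" "\<forall>u\<in>set us. set u \<subseteq> Sig \<and> Sig \<subseteq> set u"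
    "run delta (Some \<gamma>) (concat us) \<noteq> None"
    using exists_rounds[OF assms] by blast
  have "saturates cs (concat us)" if "normal_seq cs" "cs \<noteq> []" for cs
    unfolding saturates_def
  proof
    fix b assume b: "b \<in> Sig"
    have "last cs \<in> cliques Sig I" using that normal_seq_cliques by auto
    then obtain b0 where "b0 \<in> last cs" using clique_nonempty by blast
    moreover from this have "b0 \<in> Sig" using clique_subset \<open>last cs \<in> cliques Sig I\<close> by blast
    ultimately show "\<exists>k\<ge>length cs. k < length (foldl nf_insert cs (concat us)) \<and> b \<in> foldl nf_insert cs (concat us) ! k"
      using foldl_nf_insert_rounds[of us cs b0 b] R b us that by blast
  qed
  then show ?thesis using us by (intro exI[of _ "concat us"]) auto
qed

text \<open>Whatever is appended to the word read from clique \<open>k\<close> onwards, clique \<open>k\<close> stays the first clique of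
  the normal form, since every letter already occurs in a later clique.\<close>

lemma positive_node_if_letters_recur:
  assumes cs: "enabled_at \<alpha> cs" and k: "k < length cs"
    and later: "\<forall>b\<in>Sig. \<exists>j>k. j < length cs \<and> b \<in> cs ! j"
    and \<gamma>: "run delta (Some \<alpha>) (word_of (take k cs)) = Some \<gamma>"
  shows "positive_node Sig I X delta \<gamma> (cs ! k)"
proof -
  let ?x = "word_of (drop k cs)"
  have nd: "normal_seq (drop k cs)" using cs normal_seq_take_drop enabled_at_def by auto
  then have cl: "set (drop k cs) \<subseteq> cliques Sig I" using normal_seq_def by auto
  have run_x: "run delta (Some \<gamma>) ?x = run delta (Some \<alpha>) (word_of cs)"
    using \<gamma> word_of_take_drop[of cs k] by (simp add: run_append)
  then have "?x \<in> M_at Sig delta \<gamma>"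
    using cs set_word_of_subset[OF cl] unfolding M_at_def words_def enabled_at_def by auto
  moreover have "?x \<noteq> []" using k word_of_eq_Nil_iff[OF cl] by auto
  moreover have "tail_covers_Sig (drop k cs)" unfolding tail_covers_Sig_def
  proof
    fix b assume "b \<in> Sig"
    then obtain j where "j > k" "j < length cs" "b \<in> cs ! j" using later by auto
    then show "\<exists>j. 1 \<le> j \<and> j < length (drop k cs) \<and> b \<in> drop k cs ! j"
      by (intro exI[of _ "j - k"]) auto
  qed
  moreover have "first_clique_is Sig I (?x @ y) (cs ! k)" if "set y \<subseteq> Sig" for y
  proof -
    let ?cs = "foldl nf_insert (drop k cs) y"
    have "is_normal_form Sig I ?cs (?x @ y)" using foldl_nf_insert[OF nd that] is_normal_form_iff by blast
    moreover have "?cs \<noteq> []" using length_foldl_nf_insert[of "drop k cs" y] k by auto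
    moreover have "hd ?cs = cs ! k"
      using head_foldl_nf_insert[OF \<open>tail_covers_Sig (drop k cs)\<close> that] k calculation(2)
      by (simp add: hd_conv_nth)
    ultimately show ?thesis unfolding first_clique_is_def by blast
  qed
  ultimately show ?thesis unfolding positive_node_def M_at_def words_def by blast
qed

lemma adsc_path_prefix_positive_walk:
  assumes enabled: "enabled_at \<alpha> cs" and h: "h \<le> length cs"
    and later: "\<forall>b\<in>Sig. \<exists>j\<ge>h. j < length cs \<and> b \<in> cs ! j"
  shows "adsc_path \<alpha> (take h cs) \<in> walks pos_nodes pos_arc (length (adsc_path \<alpha> (take h cs)))"
proof -
  let ?p = "adsc_path \<alpha> (take h cs)"
  have enabled_take: "enabled_at \<alpha> (take h cs)"
    using enabled normal_seq_take_drop word_of_take_drop[of cs h] run_append_neq_None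
    unfolding enabled_at_def by metis
  have "set ?p \<subseteq> pos_nodes"
  proof
    fix v assume v: "v \<in> set ?p"
    obtain \<gamma> c i where v_eq: "v = (\<gamma>, c, i)" by (cases v) auto
    obtain k where k: "k < length (take h cs)" "c = take h cs ! k"
      "run delta (Some \<alpha>) (word_of (take k (take h cs))) = Some \<gamma>" "v \<in> ADSC_nodes Sig I X delta"
      using adsc_path_nodes[OF enabled_take] v v_eq by blast
    then have "k < length cs" "k < h" by auto
    moreover from this have "\<forall>b\<in>Sig. \<exists>j>k. j < length cs \<and> b \<in> cs ! j"
      using later by (meson order.strict_trans2)
    moreover have "run delta (Some \<alpha>) (word_of (take k cs)) = Some \<gamma>" using k(3) \<open>k < h\<close> by simp
    ultimately have "positive_node Sig I X delta \<gamma> (cs ! k)"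
      using positive_node_if_letters_recur[OF enabled] by blast
    then show "v \<in> pos_nodes" using k v_eq unfolding ADSC_pos_nodes_def by auto
  qed
  moreover have "successively (ADSC_arc Sig I X delta) ?p" using adsc_path_walk[OF enabled_take] .
  then have "successively pos_arc ?p" by (rule successively_mono) (use calculation in auto)
  ultimately show ?thesis unfolding walks_def by auto
qed

text \<open>Extending a run \<open>t\<close> by a saturating word \<open>w\<close> makes the cliques of the normal form that
  cover \<open>t\<close> positive; the trace of \<open>t\<close> is recovered from the resulting walk in ADSC\<open>\<^sup>+\<close> and
  the remaining short word.\<close>

lemma positive_walk_of_run:
  assumes t: "\<alpha> \<in> X" "set t \<subseteq> Sig" "run delta (Some \<alpha>) t = Some \<beta>" "t \<noteq> []"
    and w: "set w \<subseteq> Sig" "run delta (Some \<beta>) w \<noteq> None" "\<forall>cs. normal_seq cs \<longrightarrow> cs \<noteq> [] \<longrightarrow> saturates cs w"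
  defines "cs \<equiv> foldl nf_insert (nf_of t) w" and "h \<equiv> length (nf_of t)"
  defines "p \<equiv> adsc_path \<alpha> (take h cs)"
  shows "p \<in> walks pos_nodes pos_arc (length p)" "length t \<le> length p"
    "trace_eq I (map node_letter p @ word_of (drop h cs)) (t @ w)"
proof -
  have nf: "normal_seq (nf_of t)" "trace_eq I (word_of (nf_of t)) t" using nf_of t(2) by auto
  then have "nf_of t \<noteq> []" using t(4) trace_eq_length by fastforce
  have cs: "normal_seq cs" "trace_eq I (word_of cs) (word_of (nf_of t) @ w)"
    using foldl_nf_insert[OF nf(1) w(1)] cs_def by auto
  then have te: "trace_eq I (word_of cs) (t @ w)"
    using trace_eq_trans[OF _ trace_eq_append_right[OF nf(2)]] by blast
  have cl: "set cs \<subseteq> cliques Sig I" "set (take h cs) \<subseteq> cliques Sig I"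
    using cs(1) normal_seq_take_drop normal_seq_def by auto
  have "run delta (Some \<alpha>) (word_of cs) = run delta (Some \<beta>) w"
    using run_trace_eq[OF te t(1)] set_word_of_subset[OF cl(1)] t by (simp add: run_append)
  then have "enabled_at \<alpha> cs" using w(2) t(1) cs(1) unfolding enabled_at_def by simp
  moreover have "h \<le> length cs" unfolding h_def cs_def by (rule length_foldl_nf_insert)
  moreover have "\<forall>b\<in>Sig. \<exists>j\<ge>h. j < length cs \<and> b \<in> cs ! j"
    using w(3) nf(1) \<open>nf_of t \<noteq> []\<close> unfolding saturates_def cs_def h_def by blast
  ultimately show "p \<in> walks pos_nodes pos_arc (length p)"
    unfolding p_def by (rule adsc_path_prefix_positive_walk)
  have "length t \<le> length (word_of (take h cs))"
    using length_word_of_le_foldl_nf_insert_prefix[OF nf(1) w(1)] trace_eq_length[OF nf(2)]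
    unfolding h_def cs_def by simp
  then show "length t \<le> length p" unfolding p_def using length_adsc_path[OF cl(2)] by simp
  show "trace_eq I (map node_letter p @ word_of (drop h cs)) (t @ w)"
    using te map_node_letter_adsc_path[OF cl(2)] word_of_take_drop[of cs h] unfolding p_def by simp
qed

definition saturating_words :: "('x \<Rightarrow> 'a list) \<Rightarrow> bool" where
  "saturating_words W \<longleftrightarrow> (\<forall>\<gamma>\<in>X. set (W \<gamma>) \<subseteq> Sig \<and> run delta (Some \<gamma>) (W \<gamma>) \<noteq> None \<and>
     (\<forall>cs. normal_seq cs \<longrightarrow> cs \<noteq> [] \<longrightarrow> saturates cs (W \<gamma>)))"

lemma exists_saturating_words: "\<exists>W. saturating_words W"
  using bchoice[OF ballI[OF exists_saturating_word]] unfolding saturating_words_def .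

definition walk_code ::
  "('x \<Rightarrow> 'a list) \<Rightarrow> 'x \<times> 'x \<times> 'a list \<Rightarrow> ('x \<times> 'a set \<times> nat) list \<times> 'x \<times> 'x \<times> 'a list" where
  "walk_code W = (\<lambda>(\<alpha>, \<beta>, t).
     let cs = foldl nf_insert (nf_of t) (W \<beta>); h = length (nf_of t)
     in (adsc_path \<alpha> (take h cs), \<alpha>, \<beta>, word_of (drop h cs)))"

lemma walk_code_eq: "\<exists>p q. walk_code W (\<alpha>, \<beta>, t) = (p, \<alpha>, \<beta>, q)"
  unfolding walk_code_def by (simp add: Let_def)

lemma walk_code:
  assumes W: "saturating_words W" and t: "(\<alpha>, \<beta>, t) \<in> runs n" "0 < n"
    and code: "walk_code W (\<alpha>, \<beta>, t) = (p, \<alpha>, \<beta>, q)"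
  shows "p \<in> walks pos_nodes pos_arc (length p)" "n \<le> length p" "\<beta> \<in> X"
    "trace_eq I (map node_letter p @ q) (t @ W \<beta>)"
proof -
  have t': "\<alpha> \<in> X" "set t \<subseteq> Sig" "run delta (Some \<alpha>) t = Some \<beta>" "t \<noteq> []" "length t = n"
    using t unfolding runs_def by auto
  then show "\<beta> \<in> X" using run_in_X by blast
  then have "set (W \<beta>) \<subseteq> Sig" "run delta (Some \<beta>) (W \<beta>) \<noteq> None"
    "\<forall>cs. normal_seq cs \<longrightarrow> cs \<noteq> [] \<longrightarrow> saturates cs (W \<beta>)"
    using W unfolding saturating_words_def by auto
  note pw = positive_walk_of_run[OF t'(1-4) this]
  show "p \<in> walks pos_nodes pos_arc (length p)" "n \<le> length p" "trace_eq I (map node_letter p @ q) (t @ W \<beta>)"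
    using pw t'(5) code unfolding walk_code_def by (simp_all add: Let_def)
qed

lemma walk_code_in:
  assumes W: "saturating_words W" and L: "\<And>\<gamma>. \<gamma> \<in> X \<Longrightarrow> length (W \<gamma>) \<le> L" and n: "0 < n"
  shows "walk_code W ` runs n
    \<subseteq> (\<Union>m\<in>{n..n + L}. walks pos_nodes pos_arc m) \<times> X \<times> X \<times> {q. set q \<subseteq> Sig \<and> length q \<le> L}"
proof
  fix z assume "z \<in> walk_code W ` runs n"
  then obtain \<alpha> \<beta> t where r: "(\<alpha>, \<beta>, t) \<in> runs n" and z: "z = walk_code W (\<alpha>, \<beta>, t)" by auto
  obtain p q where code: "walk_code W (\<alpha>, \<beta>, t) = (p, \<alpha>, \<beta>, q)"
    using walk_code_eq by blast
  note c = walk_code[OF W r n code]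
  have "length t = n" "set t \<subseteq> Sig" "\<alpha> \<in> X" using r unfolding runs_def by auto
  moreover have "set (W \<beta>) \<subseteq> Sig" using W c(3) unfolding saturating_words_def by auto
  moreover have "length p + length q = n + length (W \<beta>)" "set q \<subseteq> set t \<union> set (W \<beta>)"
    using trace_eq_length[OF c(4)] trace_eq_set[OF c(4)] calculation(1) by auto
  ultimately show "z \<in> (\<Union>m\<in>{n..n + L}. walks pos_nodes pos_arc m) \<times> X \<times> X \<times> {q. set q \<subseteq> Sig \<and> length q \<le> L}"
    using c L[OF c(3)] unfolding z code by fastforce
qed

text \<open>The code determines the trace: both runs extended by the same word are equivalent to the
  word read off the code, and traces cancel on the right.\<close>

lemma walk_code_determines_trace_class:
  assumes W: "saturating_words W" and n: "0 < n" and xy: "x \<in> runs n" "y \<in> runs n"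
    and eq: "walk_code W x = walk_code W y"
  shows "(\<lambda>(\<alpha>, \<beta>, t). (\<alpha>, \<beta>, trace_class t)) x = (\<lambda>(\<alpha>, \<beta>, t). (\<alpha>, \<beta>, trace_class t)) y"
proof -
  obtain \<alpha> \<beta> t \<alpha>' \<beta>' t' where x: "x = (\<alpha>, \<beta>, t)" and y: "y = (\<alpha>', \<beta>', t')" by (cases x, cases y) auto
  obtain p q p' q' where cx: "walk_code W x = (p, \<alpha>, \<beta>, q)" and cy: "walk_code W y = (p', \<alpha>', \<beta>', q')"
    unfolding x y using walk_code_eq by blast
  then have same: "p' = p" "\<alpha>' = \<alpha>" "\<beta>' = \<beta>" "q' = q" using eq by auto
  have "trace_eq I (map node_letter p @ q) (t @ W \<beta>)"
    using walk_code(4)[OF W xy(1)[unfolded x] n cx[unfolded x]] .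
  moreover have "trace_eq I (map node_letter p @ q) (t' @ W \<beta>)"
    using walk_code(4)[OF W xy(2)[unfolded y] n cy[unfolded y]] unfolding same .
  ultimately have "trace_eq I (t @ W \<beta>) (t' @ W \<beta>)" by (rule trace_eq_trans[OF trace_eq_sym])
  then have "trace_eq I t t'" by (rule trace_eq_cancel_right)
  then show ?thesis using same unfolding x y by (simp add: trace_class_eq_iff)
qed

lemma card_trace_runs_le_pos_walks:
  obtains K L where "\<And>n. 0 < n \<Longrightarrow> card (trace_runs n) \<le> K * (\<Sum>m\<in>{n..n + L}. card (walks pos_nodes pos_arc m))"
proof -
  obtain W where W: "saturating_words W" using exists_saturating_words by blast
  define L where "L = Max ((\<lambda>\<gamma>. length (W \<gamma>)) ` X)"
  have L: "length (W \<gamma>) \<le> L" if "\<gamma> \<in> X" for \<gamma> unfolding L_def using that finite_X by (intro Max_ge) auto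
  define Q where "Q = {q. set q \<subseteq> Sig \<and> length q \<le> L}"
  have "finite Q" unfolding Q_def using finite_lists_length_le[OF finite_Sig] by simp
  have "finite pos_nodes" using finite_ADSC_nodes finite_subset[OF ADSC_pos_nodes_subset] by blast
  have "card (trace_runs n) \<le> (card X * card X * card Q) * (\<Sum>m\<in>{n..n + L}. card (walks pos_nodes pos_arc m))"
    if n: "0 < n" for n
  proof -
    have "card (trace_runs n) \<le> card ((\<lambda>(\<alpha>, \<beta>, t). (\<alpha>, \<beta>, trace_class t)) ` runs n)"
      by (rule card_mono[OF finite_imageI[OF finite_runs] trace_runs_subset_image])
    also have "\<dots> \<le> card (walk_code W ` runs n)"
      using walk_code_determines_trace_class[OF W n] by (intro card_image_le_if_factors finite_runs)
    also have "\<dots> \<le> card ((\<Union>m\<in>{n..n + L}. walks pos_nodes pos_arc m) \<times> X \<times> X \<times> Q)"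
      using walk_code_in[OF W L n] finite_walks[OF \<open>finite pos_nodes\<close>] finite_X \<open>finite Q\<close>
      unfolding Q_def[symmetric] by (intro card_mono finite_cartesian_product finite_UN_I) auto
    also have "\<dots> \<le> (\<Sum>m\<in>{n..n + L}. card (walks pos_nodes pos_arc m)) * card X * card X * card Q"
      using card_UN_le[of "{n..n + L}" "walks pos_nodes pos_arc"] by (simp add: card_cartesian_product)
    finally show ?thesis by (simp add: ac_simps)
  qed
  then show ?thesis using that by blast
qed

lemma pos_nodes_nonempty: "pos_nodes \<noteq> {}"
proof
  assume empty: "pos_nodes = {}"
  obtain K L where KL: "\<And>n. 0 < n \<Longrightarrow> card (trace_runs n) \<le> K * (\<Sum>m\<in>{n..n + L}. card (walks pos_nodes pos_arc m))"
    using card_trace_runs_le_pos_walks by blast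
  have "walks pos_nodes pos_arc m = {}" if "1 \<le> m" for m
    using empty that unfolding walks_def by (cases m) auto
  then have "card (trace_runs 1) = 0" using KL[of 1] by simp
  then show False using card_trace_runs_pos[of 1] by simp
qed

abbreviation adsc_radius where
  "adsc_radius \<equiv> digraph_spectral_radius (ADSC_nodes Sig I X delta) (ADSC_arc Sig I X delta)"

abbreviation pos_radius where
  "pos_radius \<equiv> digraph_spectral_radius pos_nodes pos_arc"

lemma finite_nonempty_nodes:
  "finite pos_nodes" "pos_nodes \<noteq> {}" "finite (ADSC_nodes Sig I X delta)" "ADSC_nodes Sig I X delta \<noteq> {}"
  using finite_subset[OF ADSC_pos_nodes_subset finite_ADSC_nodes] pos_nodes_nonempty finite_ADSC_nodes
    ADSC_pos_nodes_subset[of Sig I X delta] by auto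

lemma radius_nonneg: "0 \<le> pos_radius" "0 \<le> adsc_radius"
  using digraph_spectral_radius_nonneg[OF finite_nonempty_nodes(1,2)]
    digraph_spectral_radius_nonneg[OF finite_nonempty_nodes(3,4)] .

lemma exp_bounded_trace_runs_above_pos_radius:
  assumes s: "pos_radius < s"
  shows "exp_bounded (\<lambda>n. real (card (trace_runs n))) s"
proof -
  obtain K L where KL:
    "\<And>n. 0 < n \<Longrightarrow> card (trace_runs n) \<le> K * (\<Sum>m\<in>{n..n + L}. card (walks pos_nodes pos_arc m))"
    using card_trace_runs_le_pos_walks by blast
  have "exp_bounded (\<lambda>n. real (card (walks pos_nodes pos_arc n))) s"
    using exp_bounded_card_walks[OF finite_nonempty_nodes(1,2) s] .
  moreover have "0 < s" using s radius_nonneg(1) by linarith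
  ultimately have "exp_bounded (\<lambda>n. real K * (\<Sum>m\<in>{n..n + L}. real (card (walks pos_nodes pos_arc m)))) s"
    by (intro exp_bounded_cmult exp_bounded_window_sum) simp_all
  moreover have "real (card (trace_runs n)) \<le> real K * (\<Sum>m\<in>{n..n + L}. real (card (walks pos_nodes pos_arc m)))"
    if "1 \<le> n" for n
  proof -
    have "real (card (trace_runs n)) \<le> real (K * (\<Sum>m\<in>{n..n + L}. card (walks pos_nodes pos_arc m)))"
      using KL that by (simp only: of_nat_le_iff)
    then show ?thesis by simp
  qed
  ultimately show ?thesis by (rule exp_bounded_mono)
qed

lemma adsc_radius_le_if_exp_bounded_trace_runs:
  assumes s: "0 < s" "exp_bounded (\<lambda>n. real (card (trace_runs n))) s"
  shows "adsc_radius \<le> s"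
proof -
  have "exp_bounded (\<lambda>n. real (card Sig) * (\<Sum>m\<in>{n..n + 2 * card Sig}. real (card (trace_runs m)))) s"
    using s by (intro exp_bounded_cmult exp_bounded_window_sum) simp_all
  moreover have "real (card (walks (ADSC_nodes Sig I X delta) (ADSC_arc Sig I X delta) n))
      \<le> real (card Sig) * (\<Sum>m\<in>{n..n + 2 * card Sig}. real (card (trace_runs m)))" if "1 \<le> n" for n
  proof -
    have "real (card (walks (ADSC_nodes Sig I X delta) (ADSC_arc Sig I X delta) n))
        \<le> real (card Sig * (\<Sum>m\<in>{n..n + 2 * card Sig}. card (trace_runs m)))"
      using card_walks_ADSC_le[of n] that by (simp only: of_nat_le_iff)
    then show ?thesis by simp
  qed
  ultimately have "exp_bounded (\<lambda>n. real (card (walks (ADSC_nodes Sig I X delta) (ADSC_arc Sig I X delta) n))) s"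
    by (rule exp_bounded_mono)
  then show ?thesis by (rule digraph_spectral_radius_le_if_exp_bounded[OF finite_nonempty_nodes(3,4) s(1)])
qed

lemma pos_radius_le_adsc_radius: "pos_radius \<le> adsc_radius"
proof (rule dense_ge)
  fix s assume s: "adsc_radius < s"
  have "walks pos_nodes pos_arc n \<subseteq> walks (ADSC_nodes Sig I X delta) (ADSC_arc Sig I X delta) n" for n
    by (rule walks_mono[OF ADSC_pos_nodes_subset]) simp
  then have "real (card (walks pos_nodes pos_arc n))
      \<le> real (card (walks (ADSC_nodes Sig I X delta) (ADSC_arc Sig I X delta) n))" for n
    using card_mono[OF finite_walks[OF finite_nonempty_nodes(3)]] by simp
  then have "exp_bounded (\<lambda>n. real (card (walks pos_nodes pos_arc n))) s"
    by (intro exp_bounded_mono[OF exp_bounded_card_walks[OF finite_nonempty_nodes(3,4) s]])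
  moreover have "0 < s" using s radius_nonneg(2) by linarith
  ultimately show "pos_radius \<le> s"
    by (intro digraph_spectral_radius_le_if_exp_bounded[OF finite_nonempty_nodes(1,2)])
qed

theorem ADSC_spectral_radius:
  "pos_radius = adsc_radius" "1 \<le> adsc_radius" "char_root Sig I X delta = ereal (1 / adsc_radius)"
proof -
  let ?T = "\<lambda>n. real (card (trace_runs n))"
  have "adsc_radius \<le> pos_radius"
  proof (rule dense_ge)
    fix s assume s: "pos_radius < s"
    moreover from this have "0 < s" using radius_nonneg(1) by linarith
    ultimately show "adsc_radius \<le> s"
      using adsc_radius_le_if_exp_bounded_trace_runs exp_bounded_trace_runs_above_pos_radius by blast
  qed
  then show "pos_radius = adsc_radius" using pos_radius_le_adsc_radius by simp
  then have upper: "exp_bounded ?T s" if "adsc_radius < s" for s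
    using exp_bounded_trace_runs_above_pos_radius that by simp
  show "1 \<le> adsc_radius"
  proof (rule dense_ge)
    fix s assume s: "adsc_radius < s"
    have "1 ^ n \<le> ?T n" for n using card_trace_runs_pos[of n] by simp
    moreover have "0 < s" using s radius_nonneg(2) by linarith
    ultimately show "1 \<le> s" using exp_bounded_lower_bound[OF upper[OF s]] by simp
  qed
  let ?c = "\<lambda>p n. real (count_traces Sig I delta (fst p) (snd p) n)"
  have T_eq: "?T = (\<lambda>n. \<Sum>p\<in>X \<times> X. ?c p n)"
    unfolding card_trace_runs sum.cartesian_product by (simp add: case_prod_beta)
  have "Min ((\<lambda>p. conv_radius (?c p)) ` (X \<times> X)) = ereal (1 / adsc_radius)"
  proof (rule Min_conv_radius_eq_inverse)
    show "finite (X \<times> X)" "X \<times> X \<noteq> {}" "0 < adsc_radius"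
      using finite_X X_nonempty \<open>1 \<le> adsc_radius\<close> by auto
    show "\<And>s. adsc_radius < s \<Longrightarrow> exp_bounded (\<lambda>n. \<Sum>p\<in>X \<times> X. ?c p n) s"
      using upper unfolding T_eq .
    show "\<And>s. 0 < s \<Longrightarrow> exp_bounded (\<lambda>n. \<Sum>p\<in>X \<times> X. ?c p n) s \<Longrightarrow> adsc_radius \<le> s"
      using adsc_radius_le_if_exp_bounded_trace_runs unfolding T_eq .
  qed simp
  then show "char_root Sig I X delta = ereal (1 / adsc_radius)"
    unfolding char_root_def by (simp add: case_prod_beta)
qed

end

theorem corollary1:
  fixes Sig :: "'a set" and I :: "('a \<times> 'a) set"
    and X :: "'x set" and delta :: "'x \<Rightarrow> 'a \<Rightarrow> 'x option"
  assumes "concurrent_system Sig I X delta"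
    and "non_trivial Sig X delta"
    and "irreducible_system Sig I X delta"
  shows "ereal (digraph_spectral_radius (ADSC_pos_nodes Sig I X delta)
                  (\<lambda>u v. ADSC_arc Sig I X delta u v \<and>
                         u \<in> ADSC_pos_nodes Sig I X delta \<and> v \<in> ADSC_pos_nodes Sig I X delta))
           = inverse (char_root Sig I X delta)
    \<and> digraph_spectral_radius (ADSC_pos_nodes Sig I X delta)
                  (\<lambda>u v. ADSC_arc Sig I X delta u v \<and>
                         u \<in> ADSC_pos_nodes Sig I X delta \<and> v \<in> ADSC_pos_nodes Sig I X delta)
      = digraph_spectral_radius (ADSC_nodes Sig I X delta) (ADSC_arc Sig I X delta)"
proof -
  interpret irreducible_concurrent_sys Sig I X delta
    using assms by unfold_locales
  show ?thesis using ADSC_spectral_radius by simp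
qed

end
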